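(* Let $d,r:\mathbb{N}\to\mathbb{N}$ be functions such that $d$ is nondecreasing, takes only prime values at least $5$, $r$ is strictly increasing, and $3r(n)\le d(n)$ for all $n$. Let $\alpha_n=(1\;2\;\cdots\;d(n))$, $\beta_n=(1\;(1+r(n))\;(1+2r(n)))\in\mathrm{Alt}(d(n))$, $\alpha=(\alpha_n)_n$, $\beta=(\beta_n)_n\in\prod_n\mathrm{Alt}(d(n))$, and $G=\langle\alpha,\beta\rangle$. Let $L_\infty$ be the normal closure of $\beta$ in $G$. Then there is a surjective homomorphism $\tau:G\to W$ with $\tau(\alpha)=a$, $\tau(\beta)=b_0$; its kernel is $\ker\tau=\bigoplus_n\mathrm{Alt}(d(n))\le\prod_n\mathrm{Alt}(d(n))$ (in particular $\bigoplus_n\mathrm{Alt}(d(n))\le G$), and $\ker\tau\le L_\infty$.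
   Context: $\mathbb{N}=\{1,2,\dots\}$. $W=C_3\wr\mathbb{Z}=\bigoplus_{\mathbb{Z}}C_3\rtimes\mathbb{Z}$ (the lamplighter group), where $\mathbb{Z}=\langle a\rangle$ acts by shifting coordinates; $b_n$ generates the copy of $C_3$ at coordinate $n$, so $a^nb_ma^{-n}=b_{m+n}$. $\bigoplus_n\mathrm{Alt}(d(n))$ denotes the subgroup of the direct product consisting of elements with finitely many nontrivial coordinates. *)

theory Defs
  imports "HOL-Algebra.Algebra" "HOL-Combinatorics.Cycles"
begin

text \<open>An element (f,k) stands for
  (prod_m b_m^(f m)) a^k, with f finitely supported with values in {0,1,2}
  (representing C_3 = Z/3Z) and a acting by shifting coordinates.\<close>
definition lamplighter3 :: "((int \<Rightarrow> int) \<times> int) monoid" where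
  "lamplighter3 = \<lparr> carrier = {(f, k). (\<forall>m. f m \<in> {0, 1, 2}) \<and> finite {m. f m \<noteq> 0}},
      monoid.mult = (\<lambda>(f, k) (g, l). (\<lambda>m. (f m + g (m - k)) mod 3, k + l)),
      one = (\<lambda>_. 0, 0) \<rparr>"

definition lamp_a :: "(int \<Rightarrow> int) \<times> int" where
  "lamp_a = (\<lambda>_. 0, 1)"

definition lamp_b :: "int \<Rightarrow> (int \<Rightarrow> int) \<times> int" where
  "lamp_b n = (\<lambda>m. if m = n then 1 else 0, 0)"

definition normal_closure :: "('a, 'b) monoid_scheme \<Rightarrow> 'a set \<Rightarrow> 'a set" where
  "normal_closure G S = generate G (\<Union>g\<in>carrier G. (\<lambda>s. g \<otimes>\<^bsub>G\<^esub> s \<otimes>\<^bsub>G\<^esub> inv\<^bsub>G\<^esub> g) ` S)"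

abbreviation posnat :: "nat set" where "posnat \<equiv> {1..}"

definition prod_alt :: "(nat \<Rightarrow> nat) \<Rightarrow> (nat \<Rightarrow> nat \<Rightarrow> nat) monoid" where
  "prod_alt d = product_group posnat (\<lambda>n. alt_group (d n))"

definition sum_alt :: "(nat \<Rightarrow> nat) \<Rightarrow> (nat \<Rightarrow> nat \<Rightarrow> nat) monoid" where
  "sum_alt d = sum_group posnat (\<lambda>n. alt_group (d n))"

definition alpha_seq :: "(nat \<Rightarrow> nat) \<Rightarrow> nat \<Rightarrow> nat \<Rightarrow> nat" where
  "alpha_seq d = (\<lambda>n\<in>posnat. cycle_of_list [1..<d n + 1])"

definition beta_seq :: "(nat \<Rightarrow> nat) \<Rightarrow> nat \<Rightarrow> nat \<Rightarrow> nat" where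
  "beta_seq r = (\<lambda>n\<in>posnat. cycle_of_list [1, 1 + r n, 1 + 2 * r n])"

end

(* For large n the coordinates of alpha and beta act on {1..d n} the way a and b_0 act near the
   origin of the lamplighter group: alpha_n is the long cycle, and the conjugates of beta_n by
   powers alpha_n^m with |m| < r n / 2 are pairwise commuting 3-cycles on m, m + r n, m + 2 r n.
   So the coordinates of every g in G eventually agree with the model permutation of a unique
   lamplighter element tau g; tau is a homomorphism onto W, and its kernel consists of the
   elements with eventually trivial coordinates, i.e. the finitary product.
   The finitary product lies in the normal closure L of beta by induction on the coordinate n:
   the commutator of beta with its conjugate by alpha^(r n) is trivial in the coordinates beyond n
   (there the two 3-cycles are disjoint, r being increasing) and can be corrected below n, so L
   contains a double transposition in coordinate n alone.  Conjugating it by elements of G, whose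
   n-th coordinates include the long cycle and the conjugates of beta_n, yields all 3-cycles; here
   d n prime makes the points 1 + u r n (mod d n) run through all of {1..d n}. *)
theory Submission
  imports Defs "HOL-Number_Theory.Cong"
begin

section \<open>The lamplighter group\<close>

lemma lamplighter3_carrier_iff:
  "(f, k) \<in> carrier lamplighter3 \<longleftrightarrow> (\<forall>m. f m \<in> {0, 1, 2}) \<and> finite {m. f m \<noteq> 0}"
  by (simp add: lamplighter3_def)

lemma lamplighter3_mult [simp]:
  "(f, k) \<otimes>\<^bsub>lamplighter3\<^esub> (g, l) = (\<lambda>m. (f m + g (m - k)) mod 3, k + l)"
  by (simp add: lamplighter3_def)

lemma lamplighter3_one: "\<one>\<^bsub>lamplighter3\<^esub> = (\<lambda>_. 0, 0)"
  by (simp add: lamplighter3_def)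

lemma mod3_cases: "(x::int) mod 3 = 0 \<or> x mod 3 = 1 \<or> x mod 3 = 2"
  by auto

lemma mod3_eq_self: "(x::int) \<in> {0, 1, 2} \<Longrightarrow> x mod 3 = x"
  by auto

lemma finite_support_shift:
  assumes "finite {m. f m \<noteq> 0}"
  shows "finite {m::int. f (m + k) \<noteq> 0}"
proof -
  have "{m. f (m + k) \<noteq> 0} = (\<lambda>m. m - k) ` {m. f m \<noteq> 0}"
    by (auto intro: image_eqI[where x = "_ + k"])
  then show ?thesis using assms by simp
qed

lemma lamplighter3_inverse_carrier:
  assumes "(f, k) \<in> carrier lamplighter3"
  shows "(\<lambda>m. (- f (m + k)) mod 3, - k) \<in> carrier lamplighter3"
proof -
  have "{m. (- f (m + k)) mod 3 \<noteq> 0} \<subseteq> {m. f (m + k) \<noteq> 0}" by auto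
  then show ?thesis using assms finite_support_shift[of f k]
    by (simp add: lamplighter3_carrier_iff mod3_cases finite_subset)
qed

lemma lamplighter3_inverse_mult:
  "(\<lambda>m. (- f (m + k)) mod 3, - k) \<otimes>\<^bsub>lamplighter3\<^esub> (f, k) = \<one>\<^bsub>lamplighter3\<^esub>"
  by (simp add: lamplighter3_one fun_eq_iff mod_add_left_eq)

lemma group_lamplighter3: "group lamplighter3"
proof (rule groupI)
  fix x y assume x: "x \<in> carrier lamplighter3" and y: "y \<in> carrier lamplighter3"
  obtain f k g l where fg: "x = (f, k)" "y = (g, l)" by fastforce
  have "finite {m. f m \<noteq> 0}" "finite {m. g (m + - k) \<noteq> 0}"
    using x y fg finite_support_shift[of g "- k"] by (auto simp: lamplighter3_carrier_iff)
  moreover have "{m. (f m + g (m - k)) mod 3 \<noteq> 0} \<subseteq> {m. f m \<noteq> 0} \<union> {m. g (m + - k) \<noteq> 0}"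
    by auto
  ultimately show "x \<otimes>\<^bsub>lamplighter3\<^esub> y \<in> carrier lamplighter3"
    using fg by (simp add: lamplighter3_carrier_iff mod3_cases finite_subset)
next
  fix x y z assume "x \<in> carrier lamplighter3" "y \<in> carrier lamplighter3" "z \<in> carrier lamplighter3"
  obtain f k g l h j where "x = (f, k)" "y = (g, l)" "z = (h, j)" by (metis surj_pair)
  then show "x \<otimes>\<^bsub>lamplighter3\<^esub> y \<otimes>\<^bsub>lamplighter3\<^esub> z = x \<otimes>\<^bsub>lamplighter3\<^esub> (y \<otimes>\<^bsub>lamplighter3\<^esub> z)"
    by (simp add: fun_eq_iff mod_add_left_eq mod_add_right_eq algebra_simps)
next
  fix x assume x: "x \<in> carrier lamplighter3"
  obtain f k where fk: "x = (f, k)" by fastforce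
  have "f m mod 3 = f m" for m
    using x fk mod3_eq_self[of "f m"] by (simp add: lamplighter3_carrier_iff)
  then show "\<one>\<^bsub>lamplighter3\<^esub> \<otimes>\<^bsub>lamplighter3\<^esub> x = x"
    by (simp add: fk lamplighter3_one)
next
  fix x assume "x \<in> carrier lamplighter3"
  then show "\<exists>y\<in>carrier lamplighter3. y \<otimes>\<^bsub>lamplighter3\<^esub> x = \<one>\<^bsub>lamplighter3\<^esub>"
    using lamplighter3_inverse_carrier lamplighter3_inverse_mult by (metis surj_pair)
qed (simp add: lamplighter3_one lamplighter3_carrier_iff)

lemma lamplighter3_inv:
  "(f, k) \<in> carrier lamplighter3 \<Longrightarrow> inv\<^bsub>lamplighter3\<^esub> (f, k) = (\<lambda>m. (- f (m + k)) mod 3, - k)"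
  by (rule group.inv_equality[OF group_lamplighter3 lamplighter3_inverse_mult _ lamplighter3_inverse_carrier])

lemma lamp_a_carrier: "lamp_a \<in> carrier lamplighter3"
  by (simp add: lamp_a_def lamplighter3_carrier_iff)

lemma lamp_b_carrier: "lamp_b j \<in> carrier lamplighter3"
proof -
  have "{m. (if m = j then 1 else 0) \<noteq> (0::int)} = {j}" by auto
  then show ?thesis by (simp add: lamp_b_def lamplighter3_carrier_iff)
qed

abbreviation lamplighter3_gen :: "((int \<Rightarrow> int) \<times> int) set" where
  "lamplighter3_gen \<equiv> generate lamplighter3 {lamp_a, lamp_b 0}"

lemma subgroup_lamplighter3_gen: "subgroup lamplighter3_gen lamplighter3"
  by (rule group.generate_is_subgroup[OF group_lamplighter3]) (simp add: lamp_a_carrier lamp_b_carrier)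

lemma shift_in_lamplighter3_gen: "(\<lambda>_. 0, k) \<in> lamplighter3_gen"
proof -
  note H = subgroup_lamplighter3_gen
  have shift_nat: "(\<lambda>_. 0, int j) \<in> lamplighter3_gen" for j :: nat
  proof (induction j)
    case 0 show ?case using generate.one by (metis lamplighter3_one of_nat_0)
  next
    case (Suc j)
    have "(\<lambda>_. 0, int j) \<otimes>\<^bsub>lamplighter3\<^esub> lamp_a = (\<lambda>_. 0, int (Suc j))"
      by (simp add: lamp_a_def)
    moreover have "lamp_a \<in> lamplighter3_gen" by (rule generate.incl) simp
    ultimately show ?case using subgroup.m_closed[OF H Suc] by metis
  qed
  show ?thesis
  proof (cases "k \<ge> 0")
    case True then show ?thesis using shift_nat[of "nat k"] by simp
  next
    case False
    have "inv\<^bsub>lamplighter3\<^esub> (\<lambda>_. 0, int (nat (- k))) = (\<lambda>_. 0, k)"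
      using False by (subst lamplighter3_inv) (auto simp: lamplighter3_carrier_iff)
    then show ?thesis using subgroup.m_inv_closed[OF H shift_nat] by metis
  qed
qed

lemma lamp_b_in_lamplighter3_gen: "lamp_b j \<in> lamplighter3_gen"
proof -
  note H = subgroup_lamplighter3_gen
  have "(\<lambda>_. 0, j) \<otimes>\<^bsub>lamplighter3\<^esub> lamp_b 0 \<otimes>\<^bsub>lamplighter3\<^esub> (\<lambda>_. 0, - j) = lamp_b j"
    by (simp add: lamp_b_def fun_eq_iff)
  moreover have "lamp_b 0 \<in> lamplighter3_gen" by (rule generate.incl) simp
  ultimately show ?thesis
    using subgroup.m_closed[OF H subgroup.m_closed[OF H shift_in_lamplighter3_gen] shift_in_lamplighter3_gen]
    by metis
qed

lemma lamp_in_lamplighter3_gen: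
  assumes "c \<in> {0, 1, 2}"
  shows "(\<lambda>m. if m = j then c else 0, 0) \<in> lamplighter3_gen"
  using assms
proof (elim insertE emptyE)
  assume "c = 0"
  then have "(\<lambda>m. if m = j then c else 0) = (\<lambda>_. 0)" by auto
  then show ?thesis using shift_in_lamplighter3_gen[of 0] by simp
next
  assume "c = 1"
  then show ?thesis using lamp_b_in_lamplighter3_gen[of j] by (simp only: lamp_b_def)
next
  assume c: "c = 2"
  have "lamp_b j \<otimes>\<^bsub>lamplighter3\<^esub> lamp_b j = (\<lambda>m. if m = j then c else 0, 0)"
    by (simp add: c lamp_b_def fun_eq_iff)
  then show ?thesis
    using subgroup.m_closed[OF subgroup_lamplighter3_gen lamp_b_in_lamplighter3_gen lamp_b_in_lamplighter3_gen]
    by metis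
qed

lemma generate_lamplighter3: "lamplighter3_gen = carrier lamplighter3"
proof
  note H = subgroup_lamplighter3_gen
  show "lamplighter3_gen \<subseteq> carrier lamplighter3" by (rule subgroup.subset[OF H])
  have finite_support: "(f, 0) \<in> lamplighter3_gen"
    if "\<forall>m. f m \<in> {0, 1, 2}" "{m. f m \<noteq> 0} = S" "finite S" for f S
    using that(3,1,2)
  proof (induction S arbitrary: f rule: finite_induct)
    case empty
    then show ?case using shift_in_lamplighter3_gen[of 0] by (simp add: fun_eq_iff)
  next
    case (insert j S)
    have "(f(j := 0), 0) \<in> lamplighter3_gen" using insert by (intro insert.IH) auto
    moreover have "(\<lambda>m. if m = j then f j else 0, 0) \<otimes>\<^bsub>lamplighter3\<^esub> (f(j := 0), 0) = (f, 0)"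
      using insert.prems(1) by (auto simp: fun_eq_iff mod3_eq_self)
    ultimately show ?case
      using lamp_in_lamplighter3_gen[of "f j" j] insert.prems(1) subgroup.m_closed[OF H] by metis
  qed
  show "carrier lamplighter3 \<subseteq> lamplighter3_gen"
  proof
    fix w assume w: "w \<in> carrier lamplighter3"
    obtain f k where fk: "w = (f, k)" by fastforce
    have "(f, 0) \<otimes>\<^bsub>lamplighter3\<^esub> (\<lambda>_. 0, k) = w"
      using w fk mod3_eq_self by (simp add: lamplighter3_carrier_iff)
    then show "w \<in> lamplighter3_gen"
      using w fk finite_support[of f] shift_in_lamplighter3_gen[of k] subgroup.m_closed[OF H]
      by (metis lamplighter3_carrier_iff)
  qed
qed

section \<open>Cycles\<close>

lemma cycle3_apply:
  assumes "distinct [a, b, c]"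
  shows "cycle_of_list [a, b, c] x = (if x = a then b else if x = b then c else if x = c then a else x)"
  using assms by (auto simp: transpose_def)

declare cycle_of_list.simps [simp del]

definition long_cycle :: "nat \<Rightarrow> nat \<Rightarrow> nat" where
  "long_cycle p = cycle_of_list [1..<p + 1]"

definition step_triple :: "nat \<Rightarrow> nat \<Rightarrow> nat" where
  "step_triple R = cycle_of_list [1, 1 + R, 1 + 2 * R]"

lemma long_cycle_apply: "long_cycle p x = (if 1 \<le> x \<and> x \<le> p then x mod p + 1 else x)"
proof (cases "1 \<le> x \<and> x \<le> p")
  case True
  let ?cs = "[1..<p + 1]"
  have "map (cycle_of_list ?cs) ?cs = rotate1 ?cs" using cyclic_rotation[of ?cs 1] by simp
  moreover have "x - 1 < length ?cs" using True by auto
  ultimately have "cycle_of_list ?cs (?cs ! (x - 1)) = rotate1 ?cs ! (x - 1)"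
    by (metis length_map nth_map)
  moreover have "?cs ! (x - 1) = x" using True by (subst nth_upt) auto
  moreover have "rotate1 ?cs ! (x - 1) = ?cs ! (x mod p)"
    using True by (subst nth_rotate1) auto
  moreover have "?cs ! (x mod p) = x mod p + 1"
    using True by (subst nth_upt) auto
  ultimately show ?thesis using True by (simp add: long_cycle_def)
next
  case False
  then have "x \<notin> set [1..<p + 1]" by auto
  then show ?thesis using False id_outside_supp unfolding long_cycle_def by metis
qed

lemma bij_cycle_of_list: "bij (cycle_of_list cs)"
  by (rule permutation_bijective[OF permutation_of_cycle])

lemma cycle3_rotate: "distinct [a, b, c] \<Longrightarrow> cycle_of_list [a, b, c] = cycle_of_list [b, c, a]"
  using cycle_of_list_rotate_independent[of "[a, b, c]" 1] by simp

lemma cycle3_comp_self: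
  "distinct [a, b, c] \<Longrightarrow> cycle_of_list [a, b, c] \<circ> cycle_of_list [a, b, c] = cycle_of_list [a, c, b]"
  by (auto simp: fun_eq_iff transpose_def cycle_of_list.simps)

lemma inv_cycle3: "distinct [a, b, c] \<Longrightarrow> inv' (cycle_of_list [a, b, c]) = cycle_of_list [a, c, b]"
  by (rule inv_unique_comp) (auto simp: fun_eq_iff transpose_def cycle_of_list.simps)

lemma conj_cycle3:
  "bij g \<Longrightarrow> distinct [x, y, z] \<Longrightarrow> g \<circ> cycle_of_list [x, y, z] \<circ> inv' g = cycle_of_list [g x, g y, g z]"
  using conjugation_of_cycle[of "[x, y, z]" g] by simp

lemma evenperm_cycle_of_list:
  "distinct cs \<Longrightarrow> cs \<noteq> [] \<Longrightarrow> evenperm (cycle_of_list cs) \<longleftrightarrow> odd (length cs)"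
proof (induction cs rule: cycle_of_list.induct)
  case (1 i j cs)
  have "evenperm (cycle_of_list (i # j # cs)) = (evenperm (transpose i j) = evenperm (cycle_of_list (j # cs)))"
    by (simp add: evenperm_comp permutation_of_cycle permutation_swap_id cycle_of_list.simps(1))
  then show ?case using 1 by (simp add: evenperm_swap)
qed (simp_all add: cycle_of_list.simps)

lemma conj_transpose:
  assumes "bij g"
  shows "g \<circ> transpose a b \<circ> inv' g = transpose (g a) (g b)"
proof (cases "a = b")
  case True
  then show ?thesis using assms by (simp add: bij_is_surj flip: surj_iff)
next
  case False
  then show ?thesis using conjugation_of_cycle[of "[a, b]" g] assms by (simp add: cycle_of_list.simps)
qed

lemma commutator_cycle3:
  assumes "distinct [a, b, c, e]"
  shows "cycle_of_list [a, b, c] \<circ> cycle_of_list [b, c, e] \<circ> inv' (cycle_of_list [a, b, c])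
           \<circ> inv' (cycle_of_list [b, c, e]) = transpose a e \<circ> transpose b c"
proof
  fix x
  have d: "distinct [a, b, c]" "distinct [b, c, e]" "distinct [a, c, b]" "distinct [b, e, c]"
    using assms by auto
  consider "x = a" | "x = b" | "x = c" | "x = e" | "x \<notin> {a, b, c, e}" by blast
  then show "(cycle_of_list [a, b, c] \<circ> cycle_of_list [b, c, e] \<circ> inv' (cycle_of_list [a, b, c])
      \<circ> inv' (cycle_of_list [b, c, e])) x = (transpose a e \<circ> transpose b c) x"
    unfolding inv_cycle3[OF d(1)] inv_cycle3[OF d(2)]
    by cases (use assms in \<open>auto simp: cycle3_apply[OF d(1)] cycle3_apply[OF d(2)]
      cycle3_apply[OF d(3)] cycle3_apply[OF d(4)] transpose_def\<close>)
qed

lemma bij_funpow_long_cycle: "bij (long_cycle p ^^ j)"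
  unfolding long_cycle_def by (intro permutation_bijective permutation_funpow permutation_of_cycle)

lemma funpow_long_cycle: "0 < p \<Longrightarrow> (long_cycle p ^^ j) (t mod p + 1) = (t + j) mod p + 1"
proof (induction j)
  case (Suc j)
  then show ?case by (simp add: long_cycle_apply Suc_leI mod_Suc_eq)
qed simp

lemma conj_step_triple:
  assumes "1 \<le> R" and "2 * R < p"
  shows "(long_cycle p ^^ j) \<circ> step_triple R \<circ> inv' (long_cycle p ^^ j)
           = cycle_of_list [j mod p + 1, (R + j) mod p + 1, (2 * R + j) mod p + 1]"
proof -
  have image: "(long_cycle p ^^ j) (1 + t) = (t + j) mod p + 1" if "t < p" for t
    using funpow_long_cycle[of p j t] that by simp
  have "distinct [1, 1 + R, 1 + 2 * R]" using assms by auto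
  show ?thesis
    unfolding step_triple_def conj_cycle3[OF bij_funpow_long_cycle \<open>distinct [1, 1 + R, 1 + 2 * R]\<close>]
    using image[of 0] image[of R] image[of "2 * R"] assms by simp
qed

definition orbit_point :: "nat \<Rightarrow> nat \<Rightarrow> nat \<Rightarrow> nat" where
  "orbit_point p R u = u * R mod p + 1"

lemma orbit_point_in_range: "0 < p \<Longrightarrow> orbit_point p R u \<in> {1..p}"
  by (simp add: orbit_point_def Suc_leI)

lemma orbit_point_add_period: "orbit_point p R (u + p) = orbit_point p R u"
  by (simp add: orbit_point_def add_mult_distrib)

lemma orbit_point_eq_iff:
  assumes "Factorial_Ring.prime p" and "0 < R" and "R < p"
  shows "orbit_point p R u = orbit_point p R v \<longleftrightarrow> u mod p = v mod p"
proof -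
  have "coprime R p"
    using assms by (metis coprime_commute prime_imp_coprime dvd_imp_le not_le)
  then show ?thesis using cong_mult_rcancel_nat[of R p u v] by (simp add: orbit_point_def cong_def)
qed

lemma orbit_point_surj:
  assumes "Factorial_Ring.prime p" and "0 < R" and "R < p"
  shows "orbit_point p R ` {..<p} = {1..p}"
proof -
  have "inj_on (orbit_point p R) {..<p}" using orbit_point_eq_iff[OF assms] by (auto simp: inj_on_def)
  then have "card (orbit_point p R ` {..<p}) = card {1..p}" by (simp add: card_image)
  moreover have "orbit_point p R ` {..<p} \<subseteq> {1..p}" using orbit_point_in_range assms by auto
  ultimately show ?thesis by (simp add: card_subset_eq)
qed

lemma funpow_long_cycle_orbit_point:
  "0 < p \<Longrightarrow> (long_cycle p ^^ (k * R)) (orbit_point p R u) = orbit_point p R (u + k)"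
  unfolding orbit_point_def by (simp only: funpow_long_cycle) (simp add: add_mult_distrib)

lemma conj_step_triple_orbit_point:
  assumes "1 \<le> R" and "2 * R < p"
  shows "(long_cycle p ^^ (u * R)) \<circ> step_triple R \<circ> inv' (long_cycle p ^^ (u * R))
           = cycle_of_list [orbit_point p R u, orbit_point p R (u + 1), orbit_point p R (u + 2)]"
proof -
  have "(u + 1) * R = R + u * R" "(u + 2) * R = 2 * R + u * R" by simp_all
  then show ?thesis using conj_step_triple[OF assms, of "u * R"] by (simp only: orbit_point_def)
qed

lemma conj_comp: "bij g \<Longrightarrow> g \<circ> (\<sigma> \<circ> \<tau>) \<circ> inv' g = (g \<circ> \<sigma> \<circ> inv' g) \<circ> (g \<circ> \<tau> \<circ> inv' g)"
  by (simp add: fun_eq_iff bij_is_inj)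

lemma transpositions_comp_cycle3:
  assumes "distinct [a, b, c, e, x]"
  shows "(transpose a e \<circ> transpose b c) \<circ> (transpose a x \<circ> transpose b c) = cycle_of_list [a, x, e]"
    and "(transpose a e \<circ> transpose b c) \<circ> (transpose e x \<circ> transpose b c) = cycle_of_list [a, e, x]"
proof -
  have d: "distinct [a, x, e]" "distinct [a, e, x]" using assms by auto
  show "(transpose a e \<circ> transpose b c) \<circ> (transpose a x \<circ> transpose b c) = cycle_of_list [a, x, e]"
  proof
    fix y
    consider "y = a" | "y = b" | "y = c" | "y = e" | "y = x" | "y \<notin> {a, b, c, e, x}" by blast
    then show "((transpose a e \<circ> transpose b c) \<circ> (transpose a x \<circ> transpose b c)) y = cycle_of_list [a, x, e] y"
      by cases (use assms in \<open>auto simp: cycle3_apply[OF d(1)] transpose_def\<close>)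
  qed
  show "(transpose a e \<circ> transpose b c) \<circ> (transpose e x \<circ> transpose b c) = cycle_of_list [a, e, x]"
  proof
    fix y
    consider "y = a" | "y = b" | "y = c" | "y = e" | "y = x" | "y \<notin> {a, b, c, e, x}" by blast
    then show "((transpose a e \<circ> transpose b c) \<circ> (transpose e x \<circ> transpose b c)) y = cycle_of_list [a, e, x] y"
      by cases (use assms in \<open>auto simp: cycle3_apply[OF d(2)] transpose_def\<close>)
  qed
qed

lemma commutator_step_triple_shift:
  assumes "0 < j" "j < R" "3 * R \<le> p"
  defines "c \<equiv> long_cycle p ^^ j \<circ> step_triple R \<circ> inv' (long_cycle p ^^ j)"
  shows "step_triple R \<circ> c \<circ> inv' (step_triple R) \<circ> inv' c = id"
proof -
  have c: "c = cycle_of_list [j + 1, R + j + 1, 2 * R + j + 1]"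
    unfolding c_def using conj_step_triple[of R p j] assms(1-3) by simp
  have "step_triple R \<circ> c = c \<circ> step_triple R"
    unfolding c step_triple_def using assms(1,2) by (intro cycles_commute) auto
  then have "step_triple R \<circ> c \<circ> inv' (step_triple R) \<circ> inv' c = c \<circ> (step_triple R \<circ> inv' (step_triple R)) \<circ> inv' c"
    by (simp add: comp_assoc)
  also have "\<dots> = id"
    unfolding c step_triple_def by (simp add: surj_iff[THEN iffD1, OF bij_is_surj, OF bij_cycle_of_list])
  finally show ?thesis .
qed

section \<open>Permutations modelling the lamplighter group\<close>

lemma dvd_abs_less_imp_eq_0: "(p::int) dvd x \<Longrightarrow> \<bar>x\<bar> < p \<Longrightarrow> x = 0"
  using dvd_imp_le_int[of x p] by linarith

definition in_window :: "nat \<Rightarrow> int \<Rightarrow> bool" where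
  "in_window R m \<longleftrightarrow> 2 * \<bar>m\<bar> < int R"

definition triple_pos :: "nat \<Rightarrow> nat \<Rightarrow> int \<Rightarrow> int \<Rightarrow> int \<Rightarrow> bool" where
  "triple_pos p R y m i \<longleftrightarrow>
     in_window R m \<and> 0 \<le> i \<and> i < 3 \<and> y mod int p = (m + i * int R) mod int p"

definition turn_triples :: "nat \<Rightarrow> nat \<Rightarrow> (int \<Rightarrow> int) \<Rightarrow> int \<Rightarrow> int" where
  "turn_triples p R f y =
    (if \<exists>m i. triple_pos p R y m i then
      (let mi = (SOME mi. triple_pos p R y (fst mi) (snd mi)) in
        (fst mi + ((snd mi + f (fst mi)) mod 3) * int R) mod int p)
    else y mod int p)"

text \<open>The point \<open>x\<close> of \<open>{1..p}\<close> stands for the residue \<open>x - 1\<close> modulo \<open>p\<close>.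
  The element \<open>(f, k) = (\<Prod>m. b\<^sub>m\<^bsup>f m\<^esup>) a\<^sup>k\<close> of \<open>W\<close> acts by the shift
  \<open>y \<mapsto> y + k\<close> followed by turning each triple \<open>m, m + R, m + 2R\<close> with \<open>2\<bar>m\<bar> < R\<close>
  by \<open>f m\<close> steps: \<open>a\<close> is modelled by the \<open>p\<close>-cycle and \<open>b\<^sub>m\<close> by the conjugate of the 3-cycle
  \<open>(1, 1 + R, 1 + 2R)\<close> by \<open>a\<^sup>m\<close>.\<close>
definition lamp_perm :: "nat \<Rightarrow> nat \<Rightarrow> (int \<Rightarrow> int) \<times> int \<Rightarrow> nat \<Rightarrow> nat" where
  "lamp_perm p R w x =
    (if 1 \<le> x \<and> x \<le> p then nat (turn_triples p R (fst w) (int x - 1 + snd w)) + 1 else x)"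

lemma triple_pos_unique:
  assumes "3 * R \<le> p" and "triple_pos p R y m i" and "triple_pos p R y m' i'"
  shows "m = m' \<and> i = i'"
proof -
  let ?p = "int p" and ?R = "int R"
  have m: "2 * \<bar>m\<bar> < ?R" "2 * \<bar>m'\<bar> < ?R" and i: "0 \<le> i" "i < 3" "0 \<le> i'" "i' < 3"
    using assms(2,3) by (auto simp: triple_pos_def in_window_def)
  have "\<bar>i - i'\<bar> \<le> 2" using i by linarith
  then have "\<bar>(i - i') * ?R\<bar> \<le> 2 * ?R" by (simp add: abs_mult mult_right_mono)
  then have bound: "\<bar>(m - m') + (i - i') * ?R\<bar> < ?p" using m assms(1) by linarith
  have "(m + i * ?R) mod ?p = (m' + i' * ?R) mod ?p"
    using assms(2,3) by (simp add: triple_pos_def)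
  then have "?p dvd (m - m') + (i - i') * ?R"
    by (simp add: mod_eq_dvd_iff algebra_simps)
  with bound have z: "(m - m') + (i - i') * ?R = 0" by (rule dvd_abs_less_imp_eq_0[rotated])
  have "i = i'"
  proof (rule ccontr)
    assume "i \<noteq> i'"
    then have "1 \<le> \<bar>i - i'\<bar>" by linarith
    then have "?R \<le> \<bar>(i - i') * ?R\<bar>" by (simp add: abs_mult mult_le_cancel_right1)
    then show False using z m by linarith
  qed
  then show ?thesis using z by simp
qed

lemma turn_triples_mod_cong:
  assumes "y mod int p = y' mod int p"
  shows "turn_triples p R f y = turn_triples p R f y'"
proof -
  have "triple_pos p R y = triple_pos p R y'" using assms by (intro ext) (simp add: triple_pos_def)
  then show ?thesis using assms by (simp add: turn_triples_def)
qed

lemma turn_triples_triple: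
  assumes "3 * R \<le> p" and "triple_pos p R y m i"
  shows "turn_triples p R f y = (m + ((i + f m) mod 3) * int R) mod int p"
proof -
  define mi where "mi = (SOME mi. triple_pos p R y (fst mi) (snd mi))"
  have "triple_pos p R y (fst mi) (snd mi)"
    unfolding mi_def using assms(2) by (intro someI_ex[where P = "\<lambda>mi. triple_pos p R y (fst mi) (snd mi)"]) auto
  then have "fst mi = m \<and> snd mi = i" using triple_pos_unique[OF assms(1) _ assms(2)] by blast
  then show ?thesis using assms(2) unfolding turn_triples_def mi_def[symmetric] by auto
qed

lemma turn_triples_fixed:
  assumes "3 * R \<le> p" and "\<And>m i. triple_pos p R y m i \<Longrightarrow> f m mod 3 = 0"
  shows "turn_triples p R f y = y mod int p"
proof (cases "\<exists>m i. triple_pos p R y m i")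
  case True
  then obtain m i where mi: "triple_pos p R y m i" by blast
  have "(i + f m) mod 3 = (i + f m mod 3) mod 3" by (simp add: mod_add_right_eq)
  also have "\<dots> = i" using mi assms(2)[OF mi] by (simp add: triple_pos_def)
  finally have "(i + f m) mod 3 = i" .
  then show ?thesis using turn_triples_triple[OF assms(1) mi] mi by (simp add: triple_pos_def)
qed (simp add: turn_triples_def)

lemma turn_triples_range: "0 < p \<Longrightarrow> 0 \<le> turn_triples p R f y \<and> turn_triples p R f y < int p"
  by (simp add: turn_triples_def Let_def)

lemma turn_triples_zero: "3 * R \<le> p \<Longrightarrow> turn_triples p R (\<lambda>_. 0) y = y mod int p"
  by (rule turn_triples_fixed) auto

lemma turn_triples_turn_triples:
  assumes "3 * R \<le> p"
  shows "turn_triples p R f (turn_triples p R g y) = turn_triples p R (\<lambda>m. (f m + g m) mod 3) y"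
proof (cases "\<exists>m i. triple_pos p R y m i")
  case True
  then obtain m i where mi: "triple_pos p R y m i" by blast
  define j where "j = (i + g m) mod 3"
  have "triple_pos p R (turn_triples p R g y) m j"
    using mi turn_triples_triple[OF assms mi] by (simp add: triple_pos_def j_def)
  then have "turn_triples p R f (turn_triples p R g y) = (m + ((j + f m) mod 3) * int R) mod int p"
    by (rule turn_triples_triple[OF assms])
  moreover have "(j + f m) mod 3 = (i + (f m + g m) mod 3) mod 3"
  proof -
    have "(j + f m) mod 3 = (i + g m + f m) mod 3" unfolding j_def by (simp add: mod_add_left_eq)
    also have "\<dots> = (i + (f m + g m)) mod 3" by (simp add: ac_simps)
    also have "\<dots> = (i + (f m + g m) mod 3) mod 3" by (simp add: mod_add_right_eq)
    finally show ?thesis .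
  qed
  moreover have "turn_triples p R (\<lambda>m. (f m + g m) mod 3) y
      = (m + ((i + (f m + g m) mod 3) mod 3) * int R) mod int p"
    by (rule turn_triples_triple[OF assms mi])
  ultimately show ?thesis by (simp only:)
next
  case False
  then have "turn_triples p R h y = y mod int p" for h by (simp add: turn_triples_def)
  moreover have "turn_triples p R f (y mod int p) = turn_triples p R f y"
    by (rule turn_triples_mod_cong) simp
  ultimately show ?thesis by simp
qed

lemma turn_triples_shift:
  assumes "3 * R \<le> p"
    and windows: "\<And>m. g m mod 3 \<noteq> 0 \<Longrightarrow> in_window R m \<and> in_window R (m + k)"
  shows "turn_triples p R (\<lambda>m. g (m - k)) (y + k) = (turn_triples p R g y + k) mod int p"
proof (cases "\<exists>m i. triple_pos p R y m i \<and> g m mod 3 \<noteq> 0")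
  case True
  then obtain m i where mi: "triple_pos p R y m i" and gm: "g m mod 3 \<noteq> 0" by blast
  have "triple_pos p R (y + k) (m + k) i"
    using mi windows[OF gm] unfolding triple_pos_def by (metis add.commute add.left_commute mod_add_right_eq)
  then have "turn_triples p R (\<lambda>m. g (m - k)) (y + k) = (m + k + ((i + g m) mod 3) * int R) mod int p"
    using turn_triples_triple[OF assms(1)] by fastforce
  moreover have "turn_triples p R g y = (m + ((i + g m) mod 3) * int R) mod int p"
    by (rule turn_triples_triple[OF assms(1) mi])
  ultimately show ?thesis by (simp add: mod_add_left_eq mod_add_right_eq ac_simps)
next
  case False
  have "turn_triples p R (\<lambda>m. g (m - k)) (y + k) = (y + k) mod int p"
  proof (rule turn_triples_fixed[OF assms(1)])
    fix m i assume mi: "triple_pos p R (y + k) m i"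
    show "g (m - k) mod 3 = 0"
    proof (rule ccontr)
      assume ne: "g (m - k) mod 3 \<noteq> 0"
      have "(y + k - k) mod int p = (m + i * int R - k) mod int p"
        using mi by (metis triple_pos_def mod_diff_left_eq)
      then have "triple_pos p R y (m - k) i"
        using mi windows[OF ne] by (simp add: triple_pos_def algebra_simps)
      then show False using False ne by blast
    qed
  qed
  moreover have "turn_triples p R g y = y mod int p" using False by (intro turn_triples_fixed[OF assms(1)]) auto
  ultimately show ?thesis by (simp add: mod_add_left_eq)
qed

lemma lamp_perm_residue:
  assumes "0 < p"
  shows "lamp_perm p R (f, k) (nat (y mod int p) + 1) = nat (turn_triples p R f (y + k)) + 1"
proof -
  have "nat (y mod int p) < p" using assms by (simp add: nat_less_iff)
  moreover have "turn_triples p R f (y mod int p + k) = turn_triples p R f (y + k)"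
    by (rule turn_triples_mod_cong) (simp add: mod_add_left_eq)
  ultimately show ?thesis using assms by (simp add: lamp_perm_def)
qed

lemma lamp_perm_mult:
  assumes "3 * R \<le> p" and "0 < p"
    and windows: "\<And>m. g m mod 3 \<noteq> 0 \<Longrightarrow> in_window R m \<and> in_window R (m + k)"
  shows "lamp_perm p R (f, k) \<circ> lamp_perm p R (g, l) = lamp_perm p R ((f, k) \<otimes>\<^bsub>lamplighter3\<^esub> (g, l))"
proof
  fix x
  show "(lamp_perm p R (f, k) \<circ> lamp_perm p R (g, l)) x = lamp_perm p R ((f, k) \<otimes>\<^bsub>lamplighter3\<^esub> (g, l)) x"
  proof (cases "1 \<le> x \<and> x \<le> p")
    case True
    define z where "z = int x - 1 + l"
    let ?t = "turn_triples p R g z"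
    have t: "0 \<le> ?t" "?t < int p" using turn_triples_range[OF assms(2)] by auto
    have "lamp_perm p R (f, k) (lamp_perm p R (g, l) x) = nat (turn_triples p R f (?t + k)) + 1"
      using True t by (simp add: lamp_perm_def z_def)
    also have "turn_triples p R f (?t + k) = turn_triples p R f ((?t + k) mod int p)"
      by (rule turn_triples_mod_cong) simp
    also have "\<dots> = turn_triples p R f (turn_triples p R (\<lambda>m. g (m - k)) (z + k))"
      using turn_triples_shift[OF assms(1) windows] by simp
    also have "\<dots> = turn_triples p R (\<lambda>m. (f m + g (m - k)) mod 3) (z + k)"
      by (rule turn_triples_turn_triples[OF assms(1)])
    finally show ?thesis using True by (simp add: lamp_perm_def z_def algebra_simps)
  next
    case False
    then have "lamp_perm p R w x = x" for w by (auto simp: lamp_perm_def)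
    then show ?thesis by simp
  qed
qed

lemma lamp_perm_one: "3 * R \<le> p \<Longrightarrow> lamp_perm p R \<one>\<^bsub>lamplighter3\<^esub> = id"
  by (auto simp: fun_eq_iff lamp_perm_def lamplighter3_one turn_triples_zero)

lemma lamp_perm_lamp_a: "3 * R \<le> p \<Longrightarrow> lamp_perm p R lamp_a = long_cycle p"
  by (auto simp: fun_eq_iff long_cycle_apply lamp_perm_def lamp_a_def turn_triples_zero nat_mod_distrib)

lemma lamp_perm_lamp_b0_on_triple:
  assumes "1 \<le> R" and "3 * R \<le> p" and "i < 3"
  shows "lamp_perm p R (lamp_b 0) (1 + i * R) = 1 + (i + 1) mod 3 * R"
proof -
  let ?f = "\<lambda>m::int. if m = 0 then 1 else (0::int)"
  have small: "i * R \<le> 2 * R" "(i + 1) mod 3 * R \<le> 2 * R"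
    using assms(3) by (intro mult_right_mono; simp)+
  have "triple_pos p R (int (i * R)) 0 (int i)"
    using assms by (simp add: triple_pos_def in_window_def)
  then have "turn_triples p R ?f (int (i * R)) = (int i + 1) mod 3 * int R mod int p"
    using turn_triples_triple[OF assms(2)] by simp
  also have "(int i + 1) mod 3 = int ((i + 1) mod 3)" by (simp add: of_nat_mod add.commute)
  also have "int ((i + 1) mod 3) * int R mod int p = int ((i + 1) mod 3 * R)"
  proof -
    have "(i + 1) mod 3 * R < p" using small assms by linarith
    then show ?thesis by (simp flip: of_nat_mult of_nat_mod)
  qed
  finally have "turn_triples p R ?f (int (i * R)) = int ((i + 1) mod 3 * R)" .
  moreover have "i * R < p" using small assms by linarith
  ultimately show ?thesis by (simp add: lamp_perm_def lamp_b_def flip: of_nat_mult)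
qed

lemma lamp_perm_lamp_b0_off_triple:
  assumes "1 \<le> R" and "3 * R \<le> p" and "x \<notin> {1, 1 + R, 1 + 2 * R}"
  shows "lamp_perm p R (lamp_b 0) x = x"
proof (cases "1 \<le> x \<and> x \<le> p")
  case True
  let ?f = "\<lambda>m::int. if m = 0 then 1 else (0::int)"
  have "turn_triples p R ?f (int x - 1) = (int x - 1) mod int p"
  proof (rule turn_triples_fixed[OF assms(2)])
    fix m i assume mi: "triple_pos p R (int x - 1) m i"
    have i: "i = 0 \<or> i = 1 \<or> i = 2" using mi by (auto simp: triple_pos_def)
    show "?f m mod 3 = 0"
    proof (rule ccontr)
      assume "?f m mod 3 \<noteq> 0"
      then have "(int x - 1) mod int p = (i * int R) mod int p"
        using mi by (simp add: triple_pos_def split: if_splits)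
      moreover have "0 \<le> i * int R" "i * int R < int p" using i assms by auto
      ultimately have "int x - 1 = i * int R" using True by simp
      then show False using i assms(3) by auto
    qed
  qed
  moreover have "nat (int x - 1) + 1 = x" using True by linarith
  ultimately show ?thesis using True by (simp add: lamp_perm_def lamp_b_def)
qed (auto simp: lamp_perm_def)

lemma lamp_perm_lamp_b0:
  assumes "1 \<le> R" and "3 * R \<le> p"
  shows "lamp_perm p R (lamp_b 0) = step_triple R"
proof
  fix x
  have "distinct [1, 1 + R, 1 + 2 * R]" using assms by auto
  then show "lamp_perm p R (lamp_b 0) x = step_triple R x"
    unfolding step_triple_def cycle3_apply[OF \<open>distinct [1, 1 + R, 1 + 2 * R]\<close>]
    using lamp_perm_lamp_b0_on_triple[OF assms, of 0] lamp_perm_lamp_b0_on_triple[OF assms, of 1]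
      lamp_perm_lamp_b0_on_triple[OF assms, of 2] lamp_perm_lamp_b0_off_triple[OF assms, of x]
    by auto
qed

lemma turn_triples_fixes_midpoint:
  assumes "3 * R \<le> p" and "4 \<le> R" and support: "\<And>m. f m mod 3 \<noteq> 0 \<Longrightarrow> 4 * \<bar>m\<bar> < int R"
  shows "turn_triples p R f (int R div 2) = int R div 2 mod int p"
proof (rule turn_triples_fixed[OF assms(1)])
  let ?p = "int p" and ?R = "int R" and ?z = "int R div 2"
  fix m i assume mi: "triple_pos p R ?z m i"
  show "f m mod 3 = 0"
  proof (rule ccontr)
    assume "f m mod 3 \<noteq> 0"
    then have m: "4 * \<bar>m\<bar> < ?R" by (rule support)
    have i: "i = 0 \<or> i = 1 \<or> i = 2" using mi by (auto simp: triple_pos_def)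
    have "?R - 1 \<le> 2 * ?z" "2 * ?z \<le> ?R" by linarith+
    then have "0 < ?z - m" "?z - m < ?R" using m assms(2) by linarith+
    with i have "\<bar>?z - (m + i * ?R)\<bar> < ?p" "?z - (m + i * ?R) \<noteq> 0"
      using assms(1) by (elim disjE; simp; linarith)+
    moreover have "?p dvd ?z - (m + i * ?R)" using mi by (simp add: triple_pos_def mod_eq_dvd_iff)
    ultimately show False using dvd_abs_less_imp_eq_0 by blast
  qed
qed

lemma turn_triples_moves_lamp:
  assumes "3 * R \<le> p" and "f m mod 3 \<noteq> 0" and "4 * \<bar>m\<bar> < int R"
  shows "turn_triples p R f m \<noteq> m mod int p"
proof
  let ?p = "int p" and ?R = "int R"
  have "0 < f m mod 3" using assms(2) by (simp add: order_le_neq_trans)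
  moreover have "0 < ?R" using assms(3) by linarith
  ultimately have pos: "0 < f m mod 3 * ?R" by simp
  have "f m mod 3 * ?R \<le> 2 * ?R" by (rule mult_right_mono) simp_all
  then have less: "f m mod 3 * ?R < ?p" using assms(1) \<open>0 < ?R\<close> by linarith
  assume "turn_triples p R f m = m mod ?p"
  moreover have "triple_pos p R m m 0" using assms(3) by (simp add: triple_pos_def in_window_def)
  ultimately have "(m + f m mod 3 * ?R) mod ?p = m mod ?p"
    using turn_triples_triple[OF assms(1)] by fastforce
  then have "?p dvd f m mod 3 * ?R" by (simp add: mod_eq_dvd_iff)
  then show False using pos less dvd_abs_less_imp_eq_0 by fastforce
qed

text \<open>The midpoint of the first window is moved only by the shift, and a lit lamp at \<open>m\<close>
  moves the point \<open>m\<close>.\<close>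
lemma lamp_perm_eq_id_imp:
  assumes "3 * R \<le> p" and "4 \<le> R" and "\<bar>k\<bar> < int p"
    and support: "\<And>m. f m mod 3 \<noteq> 0 \<Longrightarrow> 4 * \<bar>m\<bar> < int R"
    and id: "lamp_perm p R (f, k) = id"
  shows "k = 0 \<and> (\<forall>m. f m mod 3 = 0)"
proof -
  let ?p = "int p" and ?z = "int R div 2"
  have p: "0 < p" using assms(1,2) by linarith
  have "nat ((?z - k) mod ?p) + 1 = lamp_perm p R (f, k) (nat ((?z - k) mod ?p) + 1)" using id by simp
  also have "\<dots> = nat (?z mod ?p) + 1"
    using lamp_perm_residue[OF p] turn_triples_fixes_midpoint[OF assms(1,2) support] by simp
  finally have "(?z - k) mod ?p = ?z mod ?p" using p by (simp add: eq_nat_nat_iff)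
  then have "?p dvd k" by (simp add: mod_eq_dvd_iff)
  then have k: "k = 0" using dvd_abs_less_imp_eq_0 assms(3) by blast
  have "f m mod 3 = 0" for m
  proof (rule ccontr)
    assume f: "f m mod 3 \<noteq> 0"
    have "nat (m mod ?p) + 1 = lamp_perm p R (f, k) (nat (m mod ?p) + 1)" using id by simp
    also have "\<dots> = nat (turn_triples p R f m) + 1" using lamp_perm_residue[OF p] k by simp
    finally have "turn_triples p R f m = m mod ?p"
      using turn_triples_range[OF p, of R f m] p by (simp add: eq_nat_nat_iff)
    then show False using turn_triples_moves_lamp[of R p f m, OF assms(1) f support[OF f]] by contradiction
  qed
  then show ?thesis using k by simp
qed

section \<open>Three-cycles from a long cycle and a step triple\<close>

text \<open>Inverses of 3-cycles are squares, so a composition-closed set of permutations is closed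
  under conjugation by its own 3-cycles.\<close>
lemma cycle3_conj_closed:
  assumes comp: "\<And>\<sigma> \<tau>. \<sigma> \<in> M \<Longrightarrow> \<tau> \<in> M \<Longrightarrow> \<sigma> \<circ> \<tau> \<in> M"
    and g: "cycle_of_list [u, v, w] \<in> M" "distinct [u, v, w]"
    and s: "cycle_of_list [x, y, z] \<in> M" "distinct [x, y, z]"
  shows "cycle_of_list [cycle_of_list [u, v, w] x, cycle_of_list [u, v, w] y, cycle_of_list [u, v, w] z] \<in> M"
proof -
  let ?g = "cycle_of_list [u, v, w]"
  have "?g \<circ> cycle_of_list [x, y, z] \<circ> (?g \<circ> ?g) \<in> M" using comp g s by blast
  moreover have "?g \<circ> ?g = inv' ?g" using g(2) by (simp add: inv_cycle3 cycle3_comp_self)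
  ultimately show ?thesis using conj_cycle3[OF bij_cycle_of_list s(2)] by simp
qed

lemma cycle3_through_pivot:
  assumes comp: "\<And>\<sigma> \<tau>. \<sigma> \<in> M \<Longrightarrow> \<tau> \<in> M \<Longrightarrow> \<sigma> \<circ> \<tau> \<in> M"
    and "x \<in> A" "y \<in> A" "x \<noteq> y"
    and base: "\<And>k. k \<in> A \<Longrightarrow> k \<noteq> x \<Longrightarrow> k \<noteq> y \<Longrightarrow> cycle_of_list [x, y, k] \<in> M"
    and jk: "j \<in> A" "k \<in> A" "distinct [x, j, k]"
  shows "cycle_of_list [x, j, k] \<in> M"
proof -
  have swapped: "cycle_of_list [x, k, y] \<in> M" if "k \<in> A" "k \<noteq> x" "k \<noteq> y" for k
  proof -
    have "cycle_of_list [x, y, k] \<circ> cycle_of_list [x, y, k] \<in> M" using comp base that by blast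
    then show ?thesis using that \<open>x \<noteq> y\<close> by (simp add: cycle3_comp_self)
  qed
  consider "j = y" | "k = y" | "j \<noteq> y" "k \<noteq> y" by blast
  then show ?thesis
  proof cases
    case 1 then show ?thesis using base jk by auto
  next
    case 2 then show ?thesis using swapped jk by auto
  next
    case 3
    have "distinct [x, j, y]" "distinct [x, y, k]" using 3 jk \<open>x \<noteq> y\<close> by auto
    moreover have "cycle_of_list [x, j, y] \<in> M" "cycle_of_list [x, y, k] \<in> M"
      using swapped[of j] base[of k] 3 jk by auto
    ultimately have "cycle_of_list [cycle_of_list [x, j, y] x, cycle_of_list [x, j, y] y, cycle_of_list [x, j, y] k] \<in> M"
      using cycle3_conj_closed[OF comp] by blast
    then have "cycle_of_list [j, x, k] \<in> M" using 3 jk \<open>distinct [x, j, y]\<close> by (auto simp: cycle3_apply)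
    moreover have "cycle_of_list [j, x, k] = cycle_of_list [x, k, j]"
      using jk by (intro cycle3_rotate) auto
    ultimately have "cycle_of_list [x, k, j] \<circ> cycle_of_list [x, k, j] \<in> M"
      using comp by simp
    then show ?thesis using jk cycle3_comp_self[of x k j] by auto
  qed
qed

lemma cycle3_from_pivots:
  assumes comp: "\<And>\<sigma> \<tau>. \<sigma> \<in> M \<Longrightarrow> \<tau> \<in> M \<Longrightarrow> \<sigma> \<circ> \<tau> \<in> M"
    and "x \<in> A" "y \<in> A" "x \<noteq> y" "finite A" "5 \<le> card A"
    and base: "\<And>k. k \<in> A \<Longrightarrow> k \<noteq> x \<Longrightarrow> k \<noteq> y \<Longrightarrow> cycle_of_list [x, y, k] \<in> M"
    and abc: "{a, b, c} \<subseteq> A" "distinct [a, b, c]"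
  shows "cycle_of_list [a, b, c] \<in> M"
proof (cases "x \<in> {a, b, c}")
  case True
  note pivot = cycle3_through_pivot[OF comp assms(2-4) base]
  consider "a = x" | "b = x" | "c = x" using True by blast
  then show ?thesis
  proof cases
    case 1 then show ?thesis using pivot[of b c] abc by auto
  next
    case 2 then show ?thesis using pivot[of c a] abc cycle3_rotate[of a b c] by auto
  next
    case 3 then show ?thesis using pivot[of a b] abc cycle3_rotate[of c a b] by auto
  qed
next
  case False
  have "card {x, a, b, c} \<le> 4" using card_length[of "[x, a, b, c]"] by simp
  then have "\<not> A \<subseteq> {x, a, b, c}" using card_mono[of "{x, a, b, c}" A] assms(6) by auto
  then obtain e where e: "e \<in> A" "e \<notin> {x, a, b, c}" by blast
  have "distinct [x, a, e]" "distinct [x, b, c]" using False e abc by auto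
  moreover have "cycle_of_list [x, a, e] \<in> M" "cycle_of_list [x, b, c] \<in> M"
    using cycle3_through_pivot[OF comp assms(2-4) base] False e abc by auto
  ultimately have "cycle_of_list [cycle_of_list [x, a, e] x, cycle_of_list [x, a, e] b, cycle_of_list [x, a, e] c] \<in> M"
    using cycle3_conj_closed[OF comp] by blast
  then show ?thesis using False e abc \<open>distinct [x, a, e]\<close> by (auto simp: cycle3_apply)
qed

locale three_cycle_closure =
  fixes p R :: nat and H M :: "(nat \<Rightarrow> nat) set"
  assumes prime: "Factorial_Ring.prime p" and p_ge_5: "5 \<le> p"
    and R_pos: "1 \<le> R" and R_le: "3 * R \<le> p"
    and long_cycle_in: "\<And>j. long_cycle p ^^ j \<in> H"
    and step_triple_conj_in: "\<And>j. long_cycle p ^^ j \<circ> step_triple R \<circ> inv' (long_cycle p ^^ j) \<in> H"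
    and comp_closed: "\<And>\<sigma> \<tau>. \<sigma> \<in> M \<Longrightarrow> \<tau> \<in> M \<Longrightarrow> \<sigma> \<circ> \<tau> \<in> M"
    and conj_closed: "\<And>\<sigma> g. \<sigma> \<in> M \<Longrightarrow> g \<in> H \<Longrightarrow> g \<circ> \<sigma> \<circ> inv' g \<in> M"
begin

text \<open>Label the point \<open>u R mod p + 1\<close> by \<open>u\<close>. As \<open>p\<close> is prime this relabels \<open>{1..p}\<close>, and in
  the new labels the \<open>R\<close>-th power of the long cycle is \<open>u \<mapsto> u + 1\<close> and its conjugates of the step
  triple are the 3-cycles \<open>T u\<close> on consecutive labels.\<close>
abbreviation Q :: "nat \<Rightarrow> nat" where "Q \<equiv> orbit_point p R"

abbreviation T :: "nat \<Rightarrow> nat \<Rightarrow> nat" where "T u \<equiv> cycle_of_list [Q u, Q (u + 1), Q (u + 2)]"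

lemma Q_neq: "u < p \<Longrightarrow> v < p \<Longrightarrow> u \<noteq> v \<Longrightarrow> Q u \<noteq> Q v"
  using orbit_point_eq_iff[OF prime] R_pos R_le by simp

lemma T_in: "T u \<in> H"
  using step_triple_conj_in[of "u * R"] conj_step_triple_orbit_point[of R p u] R_pos R_le by simp

lemma cycle3_conj_mem:
  assumes "cycle_of_list [x, y, z] \<in> M" "distinct [x, y, z]" "g \<in> H" "bij g"
  shows "cycle_of_list [g x, g y, g z] \<in> M"
  using conj_closed[OF assms(1,3)] conj_cycle3[OF assms(4,2)] by simp

lemma cycle3_shift:
  assumes "cycle_of_list [Q a, Q b, Q c] \<in> M" "distinct [Q a, Q b, Q c]"
  shows "cycle_of_list [Q (a + k), Q (b + k), Q (c + k)] \<in> M"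
  using cycle3_conj_mem[OF assms long_cycle_in bij_funpow_long_cycle, of "k * R"] p_ge_5
  by (simp add: funpow_long_cycle_orbit_point)

lemma pivot_cycle_window:
  assumes u: "2 \<le> u" "u + 2 < p" and vw: "v \<in> {u, u + 1, u + 2}" "w \<in> {u, u + 1, u + 2}"
    and v_in: "cycle_of_list [Q 0, Q 1, Q v] \<in> M"
  shows "cycle_of_list [Q 0, Q 1, Q w] \<in> M"
proof -
  have T: "distinct [Q u, Q (u + 1), Q (u + 2)]" using Q_neq u by auto
  have "Q 0 \<notin> {Q u, Q (u + 1), Q (u + 2)}" "Q 1 \<notin> {Q u, Q (u + 1), Q (u + 2)}"
    using Q_neq[of 0] Q_neq[of 1] u by auto
  then have fixed: "T u (Q 0) = Q 0" "T u (Q 1) = Q 1" unfolding cycle3_apply[OF T] by auto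
  have move: "cycle_of_list [Q 0, Q 1, T u (Q v')] \<in> M"
    if "v' \<in> {u, u + 1, u + 2}" "cycle_of_list [Q 0, Q 1, Q v'] \<in> M" for v'
  proof -
    have "distinct [Q 0, Q 1, Q v']" using Q_neq that(1) u by auto
    then show ?thesis
      using cycle3_conj_mem[OF that(2) _ T_in[of u] bij_cycle_of_list] fixed
      by simp
  qed
  have rotates: "T u (Q u) = Q (u + 1)" "T u (Q (u + 1)) = Q (u + 2)" "T u (Q (u + 2)) = Q u"
    using T unfolding cycle3_apply[OF T] by auto
  have "cycle_of_list [Q 0, Q 1, Q u] \<in> M \<and> cycle_of_list [Q 0, Q 1, Q (u + 1)] \<in> M
      \<and> cycle_of_list [Q 0, Q 1, Q (u + 2)] \<in> M"
    using vw(1) v_in move rotates by auto metis+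
  then show ?thesis using vw(2) by auto
qed

lemma pivot_cycles:
  assumes "cycle_of_list [Q 0, Q 1, Q (p - 3)] \<in> M" and "2 \<le> k" and "k < p"
  shows "cycle_of_list [Q 0, Q 1, Q k] \<in> M"
proof -
  have "cycle_of_list [Q 0, Q 1, Q k] \<in> M \<longleftrightarrow> cycle_of_list [Q 0, Q 1, Q 2] \<in> M"
    if "2 \<le> k" "k < p" for k
    using that
  proof (induction k rule: nat_induct_at_least)
    case (Suc k)
    define u where "u = (if k = 2 then 2 else k - 1)"
    have "2 \<le> u" "u + 2 < p" "k \<in> {u, u + 1, u + 2}" "Suc k \<in> {u, u + 1, u + 2}"
      using Suc p_ge_5 by (auto simp: u_def)
    moreover have "k < p" using Suc by simp
    ultimately show ?case
      using Suc.IH pivot_cycle_window[of u k "Suc k"] pivot_cycle_window[of u "Suc k" k] by blast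
  qed simp
  from this[of "p - 3"] this[of k] show ?thesis using assms p_ge_5 by simp
qed

lemma Q_neq_small: "u < 5 \<Longrightarrow> v < 5 \<Longrightarrow> u \<noteq> v \<Longrightarrow> Q u \<noteq> Q v"
  using Q_neq p_ge_5 by simp

text \<open>A double transposition times a conjugate sharing one of its transpositions is a 3-cycle.\<close>
lemma cycle3_from_double_transposition:
  assumes D: "transpose (Q 0) (Q 3) \<circ> transpose (Q 1) (Q 2) \<in> M" (is "?D \<in> M")
  shows "cycle_of_list [Q 0, Q 3, Q 4] \<in> M"
proof -
  have bij_T3: "bij (T 3)" by (rule bij_cycle_of_list)
  have conj_D: "T 3 \<circ> ?D \<circ> inv' (T 3) \<in> M" using conj_closed[OF D T_in] .
  show ?thesis
  proof (cases "p = 5")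
    case True
    then have "Q 5 = Q 0" using orbit_point_add_period[of p R 0] by simp
    then have T3: "cycle_of_list [Q 3, Q 4, Q 5] = cycle_of_list [Q 3, Q 4, Q 0]" by simp
    have dist: "distinct [Q 0, Q 1, Q 2, Q 3, Q 4]" using Q_neq_small by auto
    then have "T 3 \<circ> ?D \<circ> inv' (T 3) = transpose (Q 3) (Q 4) \<circ> transpose (Q 1) (Q 2)"
      unfolding conj_comp[OF bij_T3] conj_transpose[OF bij_T3] by (auto simp: T3 cycle3_apply)
    then have "?D \<circ> (transpose (Q 3) (Q 4) \<circ> transpose (Q 1) (Q 2)) \<in> M"
      using comp_closed[OF D] conj_D by simp
    then show ?thesis using transpositions_comp_cycle3(2)[of "Q 0" "Q 1" "Q 2" "Q 3" "Q 4"] dist by simp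
  next
    case False
    then have dist: "distinct [Q 0, Q 1, Q 2, Q 3, Q 4, Q 5]" using Q_neq p_ge_5 by auto
    then have "T 3 \<circ> ?D \<circ> inv' (T 3) = transpose (Q 0) (Q 4) \<circ> transpose (Q 1) (Q 2)"
      unfolding conj_comp[OF bij_T3] conj_transpose[OF bij_T3] by (auto simp: cycle3_apply)
    then have "?D \<circ> (transpose (Q 0) (Q 4) \<circ> transpose (Q 1) (Q 2)) \<in> M"
      using comp_closed[OF D] conj_D by simp
    then have "cycle_of_list [Q 0, Q 4, Q 3] \<in> M"
      using transpositions_comp_cycle3(1)[of "Q 0" "Q 1" "Q 2" "Q 3" "Q 4"] dist by simp
    then show ?thesis using comp_closed cycle3_comp_self[of "Q 0" "Q 4" "Q 3"] dist by fastforce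
  qed
qed

lemma pivot_cycle_from_commutator:
  assumes "T 0 \<circ> T 1 \<circ> inv' (T 0) \<circ> inv' (T 1) \<in> M"
  shows "cycle_of_list [Q 0, Q 1, Q (p - 3)] \<in> M"
proof -
  have "T 0 = cycle_of_list [Q 0, Q 1, Q 2]" "T 1 = cycle_of_list [Q 1, Q 2, Q 3]"
    by (simp_all add: eval_nat_numeral)
  then have "transpose (Q 0) (Q 3) \<circ> transpose (Q 1) (Q 2) \<in> M"
    using assms commutator_cycle3[of "Q 0" "Q 1" "Q 2" "Q 3"] Q_neq_small by simp
  then have "cycle_of_list [Q 0, Q 3, Q 4] \<in> M" by (rule cycle3_from_double_transposition)
  then have "cycle_of_list [Q (0 + (p - 3)), Q (3 + (p - 3)), Q (4 + (p - 3))] \<in> M"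
    using cycle3_shift[of 0 3 4 "p - 3"] Q_neq_small[of 0 3] Q_neq_small[of 0 4] Q_neq_small[of 3 4]
    by simp
  moreover have "Q (3 + (p - 3)) = Q 0" "Q (4 + (p - 3)) = Q 1"
    using orbit_point_add_period[of p R 0] orbit_point_add_period[of p R 1] p_ge_5 by simp_all
  ultimately have "cycle_of_list [Q (p - 3), Q 0, Q 1] \<in> M" by simp
  moreover have "distinct [Q (p - 3), Q 0, Q 1]"
    using Q_neq[of "p - 3" 0] Q_neq[of "p - 3" 1] Q_neq[of 0 1] p_ge_5 by auto
  ultimately show ?thesis by (simp add: cycle3_rotate)
qed

theorem three_cycles_subset:
  assumes "step_triple R \<circ> (long_cycle p ^^ R \<circ> step_triple R \<circ> inv' (long_cycle p ^^ R))
    \<circ> inv' (step_triple R) \<circ> inv' (long_cycle p ^^ R \<circ> step_triple R \<circ> inv' (long_cycle p ^^ R)) \<in> M"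
  shows "three_cycles p \<subseteq> M"
proof
  have "T 0 = step_triple R"
    using R_pos R_le by (simp add: orbit_point_def step_triple_def eval_nat_numeral)
  moreover have "T 1 = long_cycle p ^^ R \<circ> step_triple R \<circ> inv' (long_cycle p ^^ R)"
    using conj_step_triple_orbit_point[of R p 1] R_pos R_le by simp
  ultimately have Q01: "cycle_of_list [Q 0, Q 1, Q (p - 3)] \<in> M"
    using pivot_cycle_from_commutator assms by simp
  fix \<sigma> assume "\<sigma> \<in> three_cycles p"
  then obtain cs where cs: "\<sigma> = cycle_of_list cs" "distinct cs" "length cs = 3" "set cs \<subseteq> {1..p}"
    by blast
  obtain a b c where "cs = [a, b, c]" using stupid_lemma[OF cs(3)] by blast
  then have \<sigma>: "\<sigma> = cycle_of_list [a, b, c]" "distinct [a, b, c]" "{a, b, c} \<subseteq> {1..p}"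
    using cs by auto
  have pivots: "cycle_of_list [Q 0, Q 1, k] \<in> M" if "k \<in> {1..p}" "k \<noteq> Q 0" "k \<noteq> Q 1" for k
  proof -
    have "k \<in> Q ` {..<p}" using that(1) orbit_point_surj[OF prime, of R] R_pos R_le by simp
    then obtain v where "v < p" "k = Q v" by blast
    moreover from this have "v \<noteq> 0" "v \<noteq> 1" using that(2,3) by (intro notI; simp)+
    then have "2 \<le> v" by linarith
    ultimately show ?thesis using pivot_cycles[OF Q01] by simp
  qed
  show "\<sigma> \<in> M"
    unfolding \<sigma>(1)
  proof (rule cycle3_from_pivots[OF comp_closed _ _ _ _ _ pivots \<sigma>(3,2)])
    show "Q 0 \<in> {1..p}" "Q 1 \<in> {1..p}" using orbit_point_in_range p_ge_5 by auto
    show "Q 0 \<noteq> Q 1" using Q_neq p_ge_5 by simp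
  qed (use p_ge_5 in auto)
qed

end

section \<open>The product of alternating groups\<close>

lemma (in group) normal_closure_normal:
  assumes "S \<subseteq> carrier G"
  shows "normal_closure G S \<lhd> G"
  unfolding normal_closure_def
proof (rule normal_generateI)
  show "(\<Union>g\<in>carrier G. (\<lambda>s. g \<otimes> s \<otimes> inv g) ` S) \<subseteq> carrier G" using assms by blast
  fix h g assume "h \<in> (\<Union>g\<in>carrier G. (\<lambda>s. g \<otimes> s \<otimes> inv g) ` S)" and g: "g \<in> carrier G"
  then obtain g' s where "g' \<in> carrier G" "s \<in> S" "h = g' \<otimes> s \<otimes> inv g'" by blast
  moreover from this have "g \<otimes> h \<otimes> inv g = (g \<otimes> g') \<otimes> s \<otimes> inv (g \<otimes> g')"
    using g assms by (auto simp: inv_mult_group m_assoc)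
  ultimately show "g \<otimes> h \<otimes> inv g \<in> (\<Union>g\<in>carrier G. (\<lambda>s. g \<otimes> s \<otimes> inv g) ` S)"
    using g by blast
qed

lemma (in group) normal_closure_incl:
  assumes "S \<subseteq> carrier G"
  shows "S \<subseteq> normal_closure G S"
proof
  fix s assume "s \<in> S"
  then have "\<one> \<otimes> s \<otimes> inv \<one> \<in> normal_closure G S"
    unfolding normal_closure_def by (blast intro: generate.incl)
  then show "s \<in> normal_closure G S" using assms \<open>s \<in> S\<close> by auto
qed

lemma id_in_alt_group: "id \<in> carrier (alt_group n)"
  using group.is_monoid[OF alt_group_is_group, THEN monoid.one_closed] by (simp add: alt_group_one)

locale alt_product =
  fixes d r :: "nat \<Rightarrow> nat"
  assumes d_prime: "\<And>n. n \<ge> 1 \<Longrightarrow> Factorial_Ring.prime (d n) \<and> d n \<ge> 5"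
    and r_pos: "\<And>n. n \<ge> 1 \<Longrightarrow> r n \<ge> 1"
    and r_mono: "strict_mono_on posnat r"
    and rd: "\<And>n. n \<ge> 1 \<Longrightarrow> 3 * r n \<le> d n"
begin

abbreviation "P \<equiv> prod_alt d"
abbreviation "\<alpha> \<equiv> alpha_seq d"
abbreviation "\<beta> \<equiv> beta_seq r"
abbreviation "G \<equiv> subgroup_generated P {\<alpha>, \<beta>}"
abbreviation "W \<equiv> lamplighter3"

lemma r_less: "1 \<le> n \<Longrightarrow> n < i \<Longrightarrow> r n < r i"
  using r_mono by (simp add: strict_mono_on_def)

lemma r_ge: "n \<ge> 1 \<Longrightarrow> n \<le> r n"
proof (induction n rule: nat_induct_at_least)
  case (Suc n)
  then show ?case using r_less[of n "Suc n"] by simp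
qed (use r_pos in simp)

lemma group_P: "group P"
  unfolding prod_alt_def by (rule product_group) (rule alt_group_is_group)

interpretation P: group P by (rule group_P)

lemma carrier_P: "carrier P = (\<Pi>\<^sub>E n\<in>posnat. carrier (alt_group (d n)))"
  by (simp add: prod_alt_def)

lemma mult_P: "x \<otimes>\<^bsub>P\<^esub> y = (\<lambda>n\<in>posnat. x n \<circ> y n)"
  by (simp add: prod_alt_def alt_group_mult)

lemma one_P: "\<one>\<^bsub>P\<^esub> = (\<lambda>n\<in>posnat. id)"
  by (simp add: prod_alt_def alt_group_one)

lemma inv_P: "x \<in> carrier P \<Longrightarrow> inv\<^bsub>P\<^esub> x = (\<lambda>n\<in>posnat. inv' (x n))"
  unfolding prod_alt_def
  by (subst inv_product_group)
    (auto simp: carrier_P alt_group_is_group intro!: restrict_ext alt_group_inv_equality)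

lemma P_ext: "x \<in> carrier P \<Longrightarrow> y \<in> carrier P \<Longrightarrow> (\<And>n. n \<ge> 1 \<Longrightarrow> x n = y n) \<Longrightarrow> x = y"
  unfolding carrier_P by (rule PiE_ext) auto

lemma bij_P: "x \<in> carrier P \<Longrightarrow> n \<ge> 1 \<Longrightarrow> bij (x n)"
  using permutes_bij by (fastforce simp: carrier_P alt_group_carrier)

lemma alpha_apply: "n \<ge> 1 \<Longrightarrow> \<alpha> n = long_cycle (d n)"
  by (simp add: alpha_seq_def long_cycle_def del: upt_Suc)

lemma beta_apply: "n \<ge> 1 \<Longrightarrow> \<beta> n = step_triple (r n)"
  by (simp add: beta_seq_def step_triple_def)

lemma alpha_in_P: "\<alpha> \<in> carrier P"
proof -
  have "\<alpha> n \<in> carrier (alt_group (d n))" if "n \<ge> 1" for n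
  proof -
    have "odd (d n)" using d_prime[OF that] by (intro prime_odd_nat) auto
    then show ?thesis using d_prime[OF that] cycle_permutes[of "[1..<d n + 1]"] alpha_apply[OF that]
      by (auto simp: alt_group_carrier long_cycle_def evenperm_cycle_of_list atLeastLessThanSuc_atLeastAtMost
          simp del: upt_Suc)
  qed
  then show ?thesis unfolding carrier_P by (auto simp: alpha_seq_def)
qed

lemma beta_in_P: "\<beta> \<in> carrier P"
proof -
  have "\<beta> n \<in> carrier (alt_group (d n))" if "n \<ge> 1" for n
    using three_cycles_incl[of "d n"] r_pos[OF that] rd[OF that] beta_apply[OF that]
    by (fastforce simp: step_triple_def)
  then show ?thesis unfolding carrier_P by (auto simp: beta_seq_def)
qed

lemma carrier_G: "carrier G = generate P {\<alpha>, \<beta>}"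
  using alpha_in_P beta_in_P by (simp add: carrier_subgroup_generated Int_absorb1)

lemma G_subset_P: "carrier G \<subseteq> carrier P"
  by (rule P.carrier_subgroup_generated_subset)

interpretation G: group G by simp

interpretation W: group W by (rule group_lamplighter3)

lemma inv_G: "x \<in> carrier G \<Longrightarrow> inv\<^bsub>G\<^esub> x = inv\<^bsub>P\<^esub> x"
  by (rule P.inv_subgroup_generated)

lemma alpha_in_G: "\<alpha> \<in> carrier G" and beta_in_G: "\<beta> \<in> carrier G"
  unfolding carrier_G by (auto intro: generate.incl)

lemma eventually_bounded_by_r:
  assumes "finite S"
  shows "\<forall>\<^sub>F n in sequentially. \<forall>m\<in>S. 4 * \<bar>m\<bar> < int (r n)"
proof -
  define B where "B = Max (insert 0 ((\<lambda>m. 4 * \<bar>m\<bar>) ` S))"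
  have B: "4 * \<bar>m\<bar> \<le> B" if "m \<in> S" for m
    unfolding B_def using assms that by (intro Max_ge) auto
  have "0 \<le> B" unfolding B_def using assms by (intro Max_ge) auto
  show ?thesis using eventually_ge_at_top[of "nat B + 1"]
  proof (rule eventually_mono)
    fix n assume "nat B + 1 \<le> n"
    then have "B < int (r n)" using r_ge[of n] \<open>0 \<le> B\<close> by linarith
    then show "\<forall>m\<in>S. 4 * \<bar>m\<bar> < int (r n)" using B by fastforce
  qed
qed

lemma eventually_lamp_perm_mult:
  assumes "w \<in> carrier W"
  shows "\<forall>\<^sub>F n in sequentially.
           lamp_perm (d n) (r n) v \<circ> lamp_perm (d n) (r n) w = lamp_perm (d n) (r n) (v \<otimes>\<^bsub>W\<^esub> w)"
proof -
  obtain f k g l where fg: "v = (f, k)" "w = (g, l)" by fastforce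
  let ?S = "{m. g m \<noteq> 0} \<union> (\<lambda>m. m + k) ` {m. g m \<noteq> 0}"
  have "finite ?S" using assms fg by (simp add: lamplighter3_carrier_iff)
  then have "\<forall>\<^sub>F n in sequentially. (\<forall>m\<in>?S. 4 * \<bar>m\<bar> < int (r n)) \<and> 1 \<le> n"
    using eventually_ge_at_top by (intro eventually_conj eventually_bounded_by_r)
  then show ?thesis
  proof (rule eventually_mono)
    fix n assume n: "(\<forall>m\<in>?S. 4 * \<bar>m\<bar> < int (r n)) \<and> 1 \<le> n"
    have "in_window (r n) m \<and> in_window (r n) (m + k)" if "g m mod 3 \<noteq> 0" for m
    proof -
      have "m \<in> ?S" "m + k \<in> ?S" using that by auto
      then have "4 * \<bar>m\<bar> < int (r n)" "4 * \<bar>m + k\<bar> < int (r n)" using n by blast+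
      then show ?thesis unfolding in_window_def by linarith
    qed
    moreover have "0 < d n" using d_prime[of n] n by auto
    ultimately show "lamp_perm (d n) (r n) v \<circ> lamp_perm (d n) (r n) w = lamp_perm (d n) (r n) (v \<otimes>\<^bsub>W\<^esub> w)"
      unfolding fg using rd n by (intro lamp_perm_mult) auto
  qed
qed

lemma eventually_lamp_perm_one: "\<forall>\<^sub>F n in sequentially. lamp_perm (d n) (r n) \<one>\<^bsub>W\<^esub> = id"
  using eventually_ge_at_top[of 1] by (rule eventually_mono) (simp add: lamp_perm_one rd)

definition represents :: "(nat \<Rightarrow> nat \<Rightarrow> nat) \<Rightarrow> (int \<Rightarrow> int) \<times> int \<Rightarrow> bool" where
  "represents x w \<longleftrightarrow> (\<forall>\<^sub>F n in sequentially. x n = lamp_perm (d n) (r n) w)"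

lemma represents_mult:
  assumes "represents x v" "represents y w" "w \<in> carrier W"
  shows "represents (x \<otimes>\<^bsub>P\<^esub> y) (v \<otimes>\<^bsub>W\<^esub> w)"
  using assms(1,2) eventually_lamp_perm_mult[OF assms(3), of v] eventually_ge_at_top[of 1]
  unfolding represents_def by eventually_elim (simp add: mult_P)

lemma represents_one: "represents \<one>\<^bsub>P\<^esub> \<one>\<^bsub>W\<^esub>"
  using eventually_lamp_perm_one eventually_ge_at_top[of 1]
  unfolding represents_def by eventually_elim (simp add: one_P)

lemma represents_inv:
  assumes "x \<in> carrier P" "w \<in> carrier W" "represents x w"
  shows "represents (inv\<^bsub>P\<^esub> x) (inv\<^bsub>W\<^esub> w)"
proof -
  have inv_w: "inv\<^bsub>W\<^esub> w \<in> carrier W" using assms(2) by simp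
  show ?thesis
    using assms(3) eventually_lamp_perm_mult[OF assms(2), of "inv\<^bsub>W\<^esub> w"]
      eventually_lamp_perm_mult[OF inv_w, of w] eventually_lamp_perm_one eventually_ge_at_top[of 1]
    unfolding represents_def
  proof eventually_elim
    case (elim n)
    then have "inv' (x n) = lamp_perm (d n) (r n) (inv\<^bsub>W\<^esub> w)"
      using assms(2) by (intro inv_unique_comp) simp_all
    then show ?case using assms(1) elim by (simp add: inv_P)
  qed
qed

lemma represents_one_imp:
  assumes "w \<in> carrier W" "represents \<one>\<^bsub>P\<^esub> w"
  shows "w = \<one>\<^bsub>W\<^esub>"
proof -
  obtain f k where w: "w = (f, k)" by fastforce
  have f: "\<forall>m. f m \<in> {0, 1, 2}" "finite {m. f m \<noteq> 0}"
    using assms(1) by (simp_all add: w lamplighter3_carrier_iff)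
  have "\<forall>\<^sub>F n in sequentially. id = lamp_perm (d n) (r n) w"
    using assms(2) eventually_ge_at_top[of 1] unfolding represents_def
    by eventually_elim (simp add: one_P)
  then have "\<forall>\<^sub>F n in sequentially. id = lamp_perm (d n) (r n) w
      \<and> (\<forall>m\<in>insert 1 (insert k {m. f m \<noteq> 0}). 4 * \<bar>m\<bar> < int (r n)) \<and> 1 \<le> n"
    using eventually_ge_at_top[of 1] f(2) by (intro eventually_conj eventually_bounded_by_r) auto
  then obtain n where "id = lamp_perm (d n) (r n) (f, k)"
      "\<forall>m\<in>insert 1 (insert k {m. f m \<noteq> 0}). 4 * \<bar>m\<bar> < int (r n)" "1 \<le> n"
    unfolding w eventually_sequentially by blast
  then have n: "lamp_perm (d n) (r n) (f, k) = id"
      "\<forall>m\<in>insert 1 (insert k {m. f m \<noteq> 0}). 4 * \<bar>m\<bar> < int (r n)" "1 \<le> n"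
    by simp_all
  have "k = 0 \<and> (\<forall>m. f m mod 3 = 0)"
  proof (rule lamp_perm_eq_id_imp[OF rd[OF n(3)] _ _ _ n(1)])
    show "4 \<le> r n" "\<bar>k\<bar> < int (d n)" using n(2) rd[OF n(3)] by auto
    show "4 * \<bar>m\<bar> < int (r n)" if "f m mod 3 \<noteq> 0" for m
    proof -
      have "f m \<noteq> 0" using that by auto
      then show ?thesis using n(2) by simp
    qed
  qed
  moreover have "f m = f m mod 3" for m using f(1) mod3_eq_self[of "f m"] by simp
  ultimately show ?thesis by (simp add: w lamplighter3_one fun_eq_iff)
qed

lemma represents_alpha: "represents \<alpha> lamp_a"
  unfolding represents_def using eventually_ge_at_top[of 1]
  by (rule eventually_mono) (simp add: alpha_apply rd lamp_perm_lamp_a)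

lemma represents_beta: "represents \<beta> (lamp_b 0)"
  unfolding represents_def using eventually_ge_at_top[of 1]
  by (rule eventually_mono) (simp add: beta_apply lamp_perm_lamp_b0[OF r_pos rd])

lemma represents_unique:
  assumes "x \<in> carrier P" "v \<in> carrier W" "w \<in> carrier W" "represents x v" "represents x w"
  shows "v = w"
proof -
  have "represents (inv\<^bsub>P\<^esub> x \<otimes>\<^bsub>P\<^esub> x) (inv\<^bsub>W\<^esub> w \<otimes>\<^bsub>W\<^esub> v)"
    using assms by (intro represents_mult represents_inv)
  then have "inv\<^bsub>W\<^esub> w \<otimes>\<^bsub>W\<^esub> v = \<one>\<^bsub>W\<^esub>" using assms(1-3) by (intro represents_one_imp) auto
  then have "inv\<^bsub>W\<^esub> v = inv\<^bsub>W\<^esub> w" using assms(2,3) by (intro W.inv_equality) auto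
  then show ?thesis using assms(2,3) by (metis W.inv_inv)
qed

lemma represents_exists: "x \<in> carrier G \<Longrightarrow> \<exists>w\<in>carrier W. represents x w"
  unfolding carrier_G
proof (induction rule: generate.induct)
  case one
  show ?case using represents_one W.one_closed by blast
next
  case (incl x)
  then show ?case using represents_alpha represents_beta lamp_a_carrier lamp_b_carrier by blast
next
  case (inv x)
  then obtain w where "w \<in> carrier W" "represents x w"
    using represents_alpha represents_beta lamp_a_carrier lamp_b_carrier by blast
  moreover have "x \<in> carrier P" using inv alpha_in_P beta_in_P by blast
  ultimately show ?case using represents_inv W.inv_closed by blast
next
  case (eng x y)
  then show ?case
    using represents_mult W.m_closed by blast
qed

definition tau :: "(nat \<Rightarrow> nat \<Rightarrow> nat) \<Rightarrow> (int \<Rightarrow> int) \<times> int" where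
  "tau x = (SOME w. w \<in> carrier W \<and> represents x w)"

lemma tau_represents: "x \<in> carrier G \<Longrightarrow> tau x \<in> carrier W \<and> represents x (tau x)"
  unfolding tau_def by (rule someI_ex) (use represents_exists in blast)

lemma tau_eqI: "x \<in> carrier G \<Longrightarrow> w \<in> carrier W \<Longrightarrow> represents x w \<Longrightarrow> tau x = w"
  using tau_represents represents_unique G_subset_P by blast

lemma tau_hom: "tau \<in> hom G W"
proof (rule homI)
  fix x y assume "x \<in> carrier G" "y \<in> carrier G"
  moreover from this have "x \<otimes>\<^bsub>G\<^esub> y \<in> carrier G" by (rule G.m_closed)
  ultimately show "tau (x \<otimes>\<^bsub>G\<^esub> y) = tau x \<otimes>\<^bsub>W\<^esub> tau y"
    using tau_represents by (intro tau_eqI) (auto intro: represents_mult)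
qed (use tau_represents in blast)

lemma tau_alpha: "tau \<alpha> = lamp_a"
  using tau_eqI alpha_in_G lamp_a_carrier represents_alpha by blast

lemma tau_beta: "tau \<beta> = lamp_b 0"
  using tau_eqI beta_in_G lamp_b_carrier represents_beta by blast

lemma tau_epi: "tau \<in> epi G W"
proof -
  interpret tau: group_hom G W tau by unfold_locales (rule tau_hom)
  have "generate W {lamp_a, lamp_b 0} \<subseteq> tau ` carrier G"
    using alpha_in_G beta_in_G
    by (intro W.generate_subgroup_incl tau.img_is_subgroup) (auto simp flip: tau_alpha tau_beta)
  then have "tau ` carrier G = carrier W"
    using generate_lamplighter3 tau_represents by auto
  then show ?thesis using tau_hom by (simp add: epi_def)
qed

lemma represents_one_iff:
  assumes "x \<in> carrier P"
  shows "represents x \<one>\<^bsub>W\<^esub> \<longleftrightarrow> finite {n \<in> posnat. x n \<noteq> id}"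
proof -
  have "represents x \<one>\<^bsub>W\<^esub> \<longleftrightarrow> (\<forall>\<^sub>F n in sequentially. x n = id)"
    unfolding represents_def
  proof
    assume "\<forall>\<^sub>F n in sequentially. x n = lamp_perm (d n) (r n) \<one>\<^bsub>W\<^esub>"
    then show "\<forall>\<^sub>F n in sequentially. x n = id" using eventually_lamp_perm_one by eventually_elim simp
  next
    assume "\<forall>\<^sub>F n in sequentially. x n = id"
    then show "\<forall>\<^sub>F n in sequentially. x n = lamp_perm (d n) (r n) \<one>\<^bsub>W\<^esub>"
      using eventually_lamp_perm_one by eventually_elim simp
  qed
  also have "\<dots> \<longleftrightarrow> finite {n. x n \<noteq> id}"
    by (simp add: cofinite_eq_sequentially[symmetric] eventually_cofinite)
  also have "\<dots> \<longleftrightarrow> finite {n \<in> posnat. x n \<noteq> id}"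
  proof -
    have "{n. x n \<noteq> id} \<subseteq> insert 0 {n \<in> posnat. x n \<noteq> id}" by auto
    then show ?thesis
      using finite_subset[of "{n \<in> posnat. x n \<noteq> id}" "{n. x n \<noteq> id}"] finite_subset by auto
  qed
  finally show ?thesis .
qed

lemma carrier_sum_alt: "carrier (sum_alt d) = {x \<in> carrier P. finite {n \<in> posnat. x n \<noteq> id}}"
  unfolding sum_alt_def carrier_P
  by (subst carrier_sum_group) (auto simp: alt_group_is_group alt_group_one)

lemma kernel_tau: "kernel G W tau = carrier G \<inter> carrier (sum_alt d)"
proof -
  have "tau x = \<one>\<^bsub>W\<^esub> \<longleftrightarrow> represents x \<one>\<^bsub>W\<^esub>" if "x \<in> carrier G" for x
    using tau_represents[OF that] tau_eqI[OF that W.one_closed] by auto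
  then show ?thesis
    using G_subset_P represents_one_iff by (auto simp: kernel_def carrier_sum_alt)
qed

abbreviation "L \<equiv> normal_closure G {\<beta>}"

lemma normal_L: "L \<lhd> G"
  using G.normal_closure_normal beta_in_G by simp

interpretation L: normal L G by (rule normal_L)

lemma beta_in_L: "\<beta> \<in> L"
  using G.normal_closure_incl[of "{\<beta>}"] beta_in_G by blast

lemma L_subset_P: "L \<subseteq> carrier P"
  using L.subset G_subset_P by blast

definition at_coord :: "nat \<Rightarrow> (nat \<Rightarrow> nat) \<Rightarrow> nat \<Rightarrow> nat \<Rightarrow> nat" where
  "at_coord n \<sigma> = (\<lambda>i\<in>posnat. if i = n then \<sigma> else id)"

lemma at_coord_in_P: "n \<ge> 1 \<Longrightarrow> \<sigma> \<in> carrier (alt_group (d n)) \<Longrightarrow> at_coord n \<sigma> \<in> carrier P"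
  unfolding at_coord_def carrier_P using id_in_alt_group by auto

lemma at_coord_mult: "at_coord n \<sigma> \<otimes>\<^bsub>P\<^esub> at_coord n \<tau> = at_coord n (\<sigma> \<circ> \<tau>)"
  unfolding mult_P at_coord_def by (intro restrict_ext) auto

lemma conj_at_coord:
  assumes "g \<in> carrier P" and "n \<ge> 1"
  shows "g \<otimes>\<^bsub>P\<^esub> at_coord n \<sigma> \<otimes>\<^bsub>P\<^esub> inv\<^bsub>P\<^esub> g = at_coord n (g n \<circ> \<sigma> \<circ> inv' (g n))"
  unfolding mult_P inv_P[OF assms(1)] at_coord_def
  using bij_P[OF assms(1)] by (intro restrict_ext) (auto simp: bij_is_surj simp flip: surj_iff)

lemma finite_support_in_L:
  assumes "finite S" "S \<subseteq> posnat" and coords: "\<And>i \<sigma>. i \<in> S \<Longrightarrow> \<sigma> \<in> carrier (alt_group (d i)) \<Longrightarrow> at_coord i \<sigma> \<in> L"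
    and "x \<in> carrier P" "\<forall>i\<in>posnat - S. x i = id"
  shows "x \<in> L"
  using assms
proof (induction S arbitrary: x rule: finite_induct)
  case empty
  then have "x = \<one>\<^bsub>P\<^esub>" by (intro P_ext[OF _ P.one_closed]) (auto simp: one_P)
  then show ?case using L.one_closed by simp
next
  case (insert s S x)
  define x' where "x' = (\<lambda>i\<in>posnat. if i = s then id else x i)"
  have s: "s \<ge> 1" "x s \<in> carrier (alt_group (d s))" using insert.prems by (auto simp: carrier_P)
  have x': "x' \<in> carrier P"
    using insert.prems(3) id_in_alt_group by (auto simp: x'_def carrier_P)
  have "S \<subseteq> posnat" "\<forall>i\<in>posnat - S. x' i = id"
    using insert.prems(1,4) by (auto simp: x'_def)
  then have "x' \<in> L" using insert.IH[of x'] insert.prems(2) x' by blast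
  moreover have "at_coord s (x s) \<in> L" using insert.prems(2) s by simp
  moreover have "x = at_coord s (x s) \<otimes>\<^bsub>P\<^esub> x'"
    using insert.prems(3) \<open>x' \<in> carrier P\<close> at_coord_in_P[OF s]
    by (intro P_ext P.m_closed) (simp_all add: mult_P at_coord_def x'_def)
  ultimately show ?case using L.m_closed[of "at_coord s (x s)" x'] by simp
qed

lemma pow_alpha_apply: "n \<ge> 1 \<Longrightarrow> (\<alpha> [^]\<^bsub>P\<^esub> (j::nat)) n = long_cycle (d n) ^^ j"
proof (induction j)
  case (Suc j)
  then show ?case using alpha_in_P by (simp add: mult_P alpha_apply funpow_swap1)
qed (simp add: one_P)

lemma pow_alpha_in_G: "\<alpha> [^]\<^bsub>P\<^esub> (j::nat) \<in> carrier G"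
  using G.nat_pow_closed[OF alpha_in_G, of j] by (simp add: pow_subgroup_generated)

lemma conj_pow_alpha_beta_apply:
  assumes "n \<ge> 1"
  shows "(\<alpha> [^]\<^bsub>P\<^esub> (j::nat) \<otimes>\<^bsub>P\<^esub> \<beta> \<otimes>\<^bsub>P\<^esub> inv\<^bsub>P\<^esub> (\<alpha> [^]\<^bsub>P\<^esub> j)) n
           = long_cycle (d n) ^^ j \<circ> step_triple (r n) \<circ> inv' (long_cycle (d n) ^^ j)"
  using assms alpha_in_P by (simp add: mult_P inv_P pow_alpha_apply beta_apply)

lemma conj_pow_alpha_beta_in_G:
  "\<alpha> [^]\<^bsub>P\<^esub> (j::nat) \<otimes>\<^bsub>P\<^esub> \<beta> \<otimes>\<^bsub>P\<^esub> inv\<^bsub>P\<^esub> (\<alpha> [^]\<^bsub>P\<^esub> j) \<in> carrier G"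
proof -
  have "\<alpha> [^]\<^bsub>P\<^esub> j \<otimes>\<^bsub>G\<^esub> \<beta> \<otimes>\<^bsub>G\<^esub> inv\<^bsub>G\<^esub> (\<alpha> [^]\<^bsub>P\<^esub> j) \<in> carrier G"
    by (intro G.m_closed G.inv_closed pow_alpha_in_G beta_in_G)
  then show ?thesis using inv_G[OF pow_alpha_in_G] by simp
qed

lemma three_cycle_closure_at_coord:
  assumes "n \<ge> 1"
  shows "three_cycle_closure (d n) (r n) ((\<lambda>g. g n) ` carrier G) {\<sigma>. at_coord n \<sigma> \<in> L}"
proof
  show "Factorial_Ring.prime (d n)" "5 \<le> d n" "1 \<le> r n" "3 * r n \<le> d n"
    using assms d_prime r_pos rd by auto
  show "long_cycle (d n) ^^ j \<in> (\<lambda>g. g n) ` carrier G" for j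
    by (rule image_eqI[where f = "\<lambda>g. g n", OF pow_alpha_apply[OF assms, symmetric] pow_alpha_in_G])
  show "long_cycle (d n) ^^ j \<circ> step_triple (r n) \<circ> inv' (long_cycle (d n) ^^ j) \<in> (\<lambda>g. g n) ` carrier G" for j
    by (rule image_eqI[where f = "\<lambda>g. g n", OF conj_pow_alpha_beta_apply[OF assms, symmetric]
          conj_pow_alpha_beta_in_G])
  show "\<sigma> \<circ> \<tau> \<in> {\<sigma>. at_coord n \<sigma> \<in> L}" if "\<sigma> \<in> {\<sigma>. at_coord n \<sigma> \<in> L}" "\<tau> \<in> {\<sigma>. at_coord n \<sigma> \<in> L}" for \<sigma> \<tau>
    using L.m_closed[of "at_coord n \<sigma>" "at_coord n \<tau>"] that by (simp add: at_coord_mult)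
  show "g \<circ> \<sigma> \<circ> inv' g \<in> {\<sigma>. at_coord n \<sigma> \<in> L}"
    if \<sigma>: "\<sigma> \<in> {\<sigma>. at_coord n \<sigma> \<in> L}" and g: "g \<in> (\<lambda>g. g n) ` carrier G" for \<sigma> g
  proof -
    obtain h where h: "h \<in> carrier G" "g = h n" using g by blast
    then have "h \<otimes>\<^bsub>P\<^esub> at_coord n \<sigma> \<otimes>\<^bsub>P\<^esub> inv\<^bsub>P\<^esub> h \<in> L"
      using L.inv_op_closed2[of h "at_coord n \<sigma>"] \<sigma> inv_G by simp
    then show ?thesis using h G_subset_P conj_at_coord[OF _ assms] by auto
  qed
qed

lemma at_coord_in_L_if_trivial_above:
  assumes n: "n \<ge> 1" and y: "y \<in> L" and above: "\<And>i. n < i \<Longrightarrow> y i = id"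
    and below: "\<And>i \<sigma>. 1 \<le> i \<Longrightarrow> i < n \<Longrightarrow> \<sigma> \<in> carrier (alt_group (d i)) \<Longrightarrow> at_coord i \<sigma> \<in> L"
  shows "at_coord n (y n) \<in> L"
proof -
  have y_P: "y \<in> carrier P" using y L_subset_P by blast
  define z where "z = (\<lambda>i\<in>posnat. if i < n then y i else id)"
  have z: "z \<in> carrier P"
    using y_P id_in_alt_group by (auto simp: z_def carrier_P)
  have "z \<in> L"
    by (rule finite_support_in_L[of "{1..<n}"]) (use below z in \<open>auto simp: z_def\<close>)
  then have "y \<otimes>\<^bsub>G\<^esub> inv\<^bsub>G\<^esub> z \<in> L" using y by (intro L.m_closed L.m_inv_closed)
  moreover have "z \<in> carrier G" using \<open>z \<in> L\<close> L.subset by blast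
  ultimately have "y \<otimes>\<^bsub>P\<^esub> inv\<^bsub>P\<^esub> z \<in> L" by (simp add: inv_G)
  moreover have "y \<otimes>\<^bsub>P\<^esub> inv\<^bsub>P\<^esub> z = at_coord n (y n)"
  proof (rule P_ext)
    show "y \<otimes>\<^bsub>P\<^esub> inv\<^bsub>P\<^esub> z \<in> carrier P" using y_P z by simp
    have "y n \<in> carrier (alt_group (d n))" using y_P n by (auto simp: carrier_P)
    then show "at_coord n (y n) \<in> carrier P" by (rule at_coord_in_P[OF n])
    fix i :: nat assume "i \<ge> 1"
    then show "(y \<otimes>\<^bsub>P\<^esub> inv\<^bsub>P\<^esub> z) i = at_coord n (y n) i"
      using z above bij_P[OF y_P]
      by (auto simp: mult_P inv_P z_def at_coord_def surj_iff[symmetric] bij_is_surj)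
  qed
  ultimately show ?thesis by simp
qed

text \<open>The commutator of \<open>\<beta>\<close> with its conjugate by \<open>\<alpha>\<^bsup>r n\<^esup>\<close> is trivial in every
  coordinate \<open>i > n\<close>, where the two 3-cycles are disjoint because \<open>r n < r i\<close>.\<close>
lemma commutator_in_L:
  assumes n: "n \<ge> 1"
    and below: "\<And>i \<sigma>. 1 \<le> i \<Longrightarrow> i < n \<Longrightarrow> \<sigma> \<in> carrier (alt_group (d i)) \<Longrightarrow> at_coord i \<sigma> \<in> L"
  defines "c \<equiv> long_cycle (d n) ^^ r n \<circ> step_triple (r n) \<circ> inv' (long_cycle (d n) ^^ r n)"
  shows "at_coord n (step_triple (r n) \<circ> c \<circ> inv' (step_triple (r n)) \<circ> inv' c) \<in> L"
proof -
  define x where "x = \<alpha> [^]\<^bsub>P\<^esub> r n \<otimes>\<^bsub>P\<^esub> \<beta> \<otimes>\<^bsub>P\<^esub> inv\<^bsub>P\<^esub> (\<alpha> [^]\<^bsub>P\<^esub> r n)"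
  define y where "y = \<beta> \<otimes>\<^bsub>P\<^esub> x \<otimes>\<^bsub>P\<^esub> inv\<^bsub>P\<^esub> \<beta> \<otimes>\<^bsub>P\<^esub> inv\<^bsub>P\<^esub> x"
  have "x \<in> L"
    using L.inv_op_closed2[OF pow_alpha_in_G beta_in_L] inv_G[OF pow_alpha_in_G] by (simp add: x_def)
  then have "\<beta> \<otimes>\<^bsub>G\<^esub> x \<otimes>\<^bsub>G\<^esub> inv\<^bsub>G\<^esub> \<beta> \<otimes>\<^bsub>G\<^esub> inv\<^bsub>G\<^esub> x \<in> L"
    using beta_in_L by (intro L.m_closed L.m_inv_closed)
  moreover have "x \<in> carrier G" using \<open>x \<in> L\<close> L.subset by blast
  ultimately have "y \<in> L" using beta_in_G by (simp add: y_def inv_G)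
  have x_apply: "x i = long_cycle (d i) ^^ r n \<circ> step_triple (r i) \<circ> inv' (long_cycle (d i) ^^ r n)"
    if "i \<ge> 1" for i
    using conj_pow_alpha_beta_apply[OF that] by (simp add: x_def)
  have y_apply: "y i = step_triple (r i) \<circ> x i \<circ> inv' (step_triple (r i)) \<circ> inv' (x i)" if "i \<ge> 1" for i
    using that beta_in_P \<open>x \<in> L\<close> L_subset_P by (auto simp: y_def mult_P inv_P beta_apply)
  have "y i = id" if "n < i" for i
  proof -
    have "0 < r n" "r n < r i" "3 * r i \<le> d i" using that n r_pos[OF n] r_less rd[of i] by auto
    then show ?thesis using y_apply[of i] x_apply[of i] commutator_step_triple_shift that n by simp
  qed
  then have "at_coord n (y n) \<in> L" by (rule at_coord_in_L_if_trivial_above[OF n \<open>y \<in> L\<close> _ below])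
  then show ?thesis using y_apply[OF n] x_apply[OF n] by (simp add: c_def)
qed

lemma at_coord_in_L: "n \<ge> 1 \<Longrightarrow> \<sigma> \<in> carrier (alt_group (d n)) \<Longrightarrow> at_coord n \<sigma> \<in> L"
proof (induction n arbitrary: \<sigma> rule: less_induct)
  case (less n)
  interpret three_cycle_closure "d n" "r n" "(\<lambda>g. g n) ` carrier G" "{\<sigma>. at_coord n \<sigma> \<in> L}"
    using three_cycle_closure_at_coord[OF less.prems(1)] .
  have three: "three_cycles (d n) \<subseteq> {\<sigma>. at_coord n \<sigma> \<in> L}"
    using three_cycles_subset commutator_in_L[OF less.prems(1)] less.IH by simp
  have "\<sigma> \<in> generate (alt_group (d n)) (three_cycles (d n))"
    using less.prems(2) alt_group_carrier_as_three_cycles by blast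
  then have "at_coord n \<sigma> \<in> L"
  proof (induction rule: generate.induct)
    case one
    have "at_coord n \<one>\<^bsub>alt_group (d n)\<^esub> = \<one>\<^bsub>P\<^esub>" by (simp add: at_coord_def one_P alt_group_one)
    then show ?case using L.one_closed by simp
  next
    case (incl h) then show ?case using three by blast
  next
    case (inv h)
    then obtain cs where cs: "h = cycle_of_list cs" "distinct cs" "length cs = 3" by blast
    obtain a b c where "cs = [a, b, c]" using stupid_lemma[OF cs(3)] by blast
    then have "inv' h = h \<circ> h" using cs by (simp add: inv_cycle3 cycle3_comp_self)
    moreover have "inv\<^bsub>alt_group (d n)\<^esub> h = inv' h"
      using inv three_cycles_incl by (intro alt_group_inv_equality) blast
    moreover have "h \<in> {\<sigma>. at_coord n \<sigma> \<in> L}" using inv three by blast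
    ultimately show ?case using comp_closed[of h h] by (simp only: mem_Collect_eq)
  next
    case (eng h1 h2)
    then show ?case using comp_closed[of h1 h2] by (simp only: alt_group_mult mem_Collect_eq)
  qed
  then show ?case .
qed

lemma sum_alt_subset_L: "carrier (sum_alt d) \<subseteq> L"
proof
  fix x assume "x \<in> carrier (sum_alt d)"
  then have x: "x \<in> carrier P" "finite {n \<in> posnat. x n \<noteq> id}" by (auto simp: carrier_sum_alt)
  show "x \<in> L"
  proof (rule finite_support_in_L[OF x(2) _ _ x(1)])
    show "at_coord i \<sigma> \<in> L" if "i \<in> {n \<in> posnat. x n \<noteq> id}" "\<sigma> \<in> carrier (alt_group (d i))" for i \<sigma>
      using that by (intro at_coord_in_L) auto
  qed auto
qed

end

theorem proposition3p5:
  fixes d r :: "nat \<Rightarrow> nat"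
  assumes d_mono: "mono_on posnat d"
    and d_prime: "\<And>n. n \<ge> 1 \<Longrightarrow> Factorial_Ring.prime (d n) \<and> d n \<ge> 5"
    and r_pos: "\<And>n. n \<ge> 1 \<Longrightarrow> r n \<ge> 1"
    and r_mono: "strict_mono_on posnat r"
    and rd: "\<And>n. n \<ge> 1 \<Longrightarrow> 3 * r n \<le> d n"
  defines "G \<equiv> subgroup_generated (prod_alt d) {alpha_seq d, beta_seq r}"
  shows "\<exists>\<tau>. \<tau> \<in> epi G lamplighter3
            \<and> \<tau> (alpha_seq d) = lamp_a \<and> \<tau> (beta_seq r) = lamp_b 0
            \<and> kernel G lamplighter3 \<tau> = carrier (sum_alt d)
            \<and> carrier (sum_alt d) \<subseteq> carrier G
            \<and> kernel G lamplighter3 \<tau> \<subseteq> normal_closure G {beta_seq r}"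
proof -
  interpret alt_product d r
    using d_prime r_pos r_mono rd by unfold_locales auto
  have "carrier (sum_alt d) \<subseteq> carrier G"
    using sum_alt_subset_L normal_imp_subgroup[OF normal_L] subgroup.subset unfolding G_def by blast
  moreover from this have "kernel G lamplighter3 tau = carrier (sum_alt d)"
    using kernel_tau unfolding G_def by blast
  ultimately show ?thesis
    using tau_epi tau_alpha tau_beta sum_alt_subset_L unfolding G_def by auto
qed

end
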